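(* Let $\{R_\alpha:\alpha\in\Phi\}$ be an $R$-matrix. For $v\in W_{\mathrm{aff}}$ and a decomposition $v=s_{i_1}\cdots s_{i_l}$ (reduced or not) into generators $s_0,\dots,s_r$, let $\beta_j=\bar s_{i_1}\cdots\bar s_{i_{j-1}}(\alpha_{i_j})$ for $j=1,\dots,l$. Then the operator $R_{\beta_l}R_{\beta_{l-1}}\cdots R_{\beta_1}$ depends only on $v$, not on the choice of decomposition.
   Context: $\Phi$ is an irreducible root system with simple roots $\alpha_1,\dots,\alpha_r$, coroots $\alpha^\vee=2\alpha/(\alpha,\alpha)$, Weyl group $W$. $W_{\mathrm{aff}}$ is the affine Weyl group generated by the affine reflections $s_{\alpha,k}(\lambda)=\lambda-((\lambda,\alpha^\vee)-k)\alpha$; it is a Coxeter group with generators $s_0=s_{\alpha_0,-1}$ and $s_i=s_{\alpha_i,0}$, $i=1,\dots,r$, where $\alpha_0=-\theta$ and $\theta^\vee$ is the highest coroot. For $v\in W_{\mathrm{aff}}$, $\bar v\in W$ is its linear part ($\bar s_{\alpha,k}=s_\alpha$). A collection of invertible operators $\{R_\alpha:\alpha\in\Phi\}$ on a vector space is an $R$-matrix (satisfies the Yang–Baxter equation) if $R_{-\alpha}=R_\alpha^{-1}$ for all $\alpha$, and for every pair $\alpha,\beta\in\Phi$ with $(\alpha,\beta)\le0$, $$R_\alpha R_{s_\alpha(\beta)}R_{s_\alpha s_\beta(\alpha)}\cdots R_{s_\beta(\alpha)}R_\beta=R_\beta R_{s_\beta(\alpha)}\cdots R_{s_\alpha s_\beta(\alpha)}R_{s_\alpha(\beta)}R_\alpha,$$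 where each side has $m$ factors, $2m$ being the order of the dihedral group generated by $s_\alpha,s_\beta$, and the subscripts run over the $m$ roots of the rank-2 subsystem generated by $\alpha,\beta$ that are nonnegative combinations of $\alpha,\beta$, in the order $\alpha,s_\alpha(\beta),s_\alpha s_\beta(\alpha),\dots,s_\beta(\alpha),\beta$. *)

theory Defs
  imports "HOL-Analysis.Analysis"
begin

definition coroot :: "'a::euclidean_space \<Rightarrow> 'a" where
  "coroot \<alpha> = (2 / (\<alpha> \<bullet> \<alpha>)) *\<^sub>R \<alpha>"

definition refl :: "'a::euclidean_space \<Rightarrow> 'a \<Rightarrow> 'a" where
  "refl \<alpha> x = x - (x \<bullet> coroot \<alpha>) *\<^sub>R \<alpha>"

definition aff_refl :: "'a::euclidean_space \<Rightarrow> real \<Rightarrow> 'a \<Rightarrow> 'a" where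
  "aff_refl \<alpha> k x = x - ((x \<bullet> coroot \<alpha>) - k) *\<^sub>R \<alpha>"

definition root_system :: "'a::euclidean_space set \<Rightarrow> bool" where
  "root_system \<Phi> \<longleftrightarrow> finite \<Phi> \<and> 0 \<notin> \<Phi> \<and> span \<Phi> = UNIV \<and>
     (\<forall>\<alpha>\<in>\<Phi>. \<forall>\<beta>\<in>\<Phi>. refl \<alpha> \<beta> \<in> \<Phi>) \<and>
     (\<forall>\<alpha>\<in>\<Phi>. \<forall>\<beta>\<in>\<Phi>. \<beta> \<bullet> coroot \<alpha> \<in> \<int>) \<and>
     (\<forall>\<alpha>\<in>\<Phi>. \<forall>c. c *\<^sub>R \<alpha> \<in> \<Phi> \<longrightarrow> c = 1 \<or> c = -1)"

definition irreducible_root_system :: "'a::euclidean_space set \<Rightarrow> bool" where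
  "irreducible_root_system \<Phi> \<longleftrightarrow> root_system \<Phi> \<and> \<Phi> \<noteq> {} \<and>
     \<not> (\<exists>A B. A \<noteq> {} \<and> B \<noteq> {} \<and> A \<union> B = \<Phi> \<and> A \<inter> B = {} \<and>
              (\<forall>x\<in>A. \<forall>y\<in>B. x \<bullet> y = 0))"

definition simple_roots :: "'a::euclidean_space set \<Rightarrow> nat \<Rightarrow> (nat \<Rightarrow> 'a) \<Rightarrow> bool" where
  "simple_roots \<Phi> r \<alpha> \<longleftrightarrow> inj_on \<alpha> {1..r} \<and> \<alpha> ` {1..r} \<subseteq> \<Phi> \<and>
     independent (\<alpha> ` {1..r}) \<and>
     (\<forall>\<beta>\<in>\<Phi>. \<exists>c::nat \<Rightarrow> int. \<beta> = (\<Sum>i=1..r. of_int (c i) *\<^sub>R \<alpha> i) \<and>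
        ((\<forall>i\<in>{1..r}. c i \<ge> 0) \<or> (\<forall>i\<in>{1..r}. c i \<le> 0)))"

definition highest_coroot_root :: "'a::euclidean_space set \<Rightarrow> nat \<Rightarrow> (nat \<Rightarrow> 'a) \<Rightarrow> 'a \<Rightarrow> bool" where
  "highest_coroot_root \<Phi> r \<alpha> \<theta> \<longleftrightarrow> \<theta> \<in> \<Phi> \<and>
     (\<forall>\<beta>\<in>\<Phi>. \<exists>c::nat \<Rightarrow> nat. coroot \<theta> - coroot \<beta> = (\<Sum>i=1..r. of_nat (c i) *\<^sub>R coroot (\<alpha> i)))"

definition aff_simple :: "(nat \<Rightarrow> 'a::euclidean_space) \<Rightarrow> 'a \<Rightarrow> nat \<Rightarrow> 'a" where
  "aff_simple \<alpha> \<theta> i = (if i = 0 then - \<theta> else \<alpha> i)"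

definition gen :: "(nat \<Rightarrow> 'a::euclidean_space) \<Rightarrow> 'a \<Rightarrow> nat \<Rightarrow> 'a \<Rightarrow> 'a" where
  "gen \<alpha> \<theta> i = (if i = 0 then aff_refl (- \<theta>) (-1) else aff_refl (\<alpha> i) 0)"

definition gen_lin :: "(nat \<Rightarrow> 'a::euclidean_space) \<Rightarrow> 'a \<Rightarrow> nat \<Rightarrow> 'a \<Rightarrow> 'a" where
  "gen_lin \<alpha> \<theta> i = refl (aff_simple \<alpha> \<theta> i)"

definition word_elem :: "(nat \<Rightarrow> 'a::euclidean_space) \<Rightarrow> 'a \<Rightarrow> nat list \<Rightarrow> 'a \<Rightarrow> 'a" where
  "word_elem \<alpha> \<theta> w = foldr (\<circ>) (map (gen \<alpha> \<theta>) w) id"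

text \<open>beta_j = bar s_{i_1} ... bar s_{i_{j-1}} (alpha_{i_j}); here 0-indexed: j = 0..l-1.\<close>
definition word_roots :: "(nat \<Rightarrow> 'a::euclidean_space) \<Rightarrow> 'a \<Rightarrow> nat list \<Rightarrow> 'a list" where
  "word_roots \<alpha> \<theta> w = map (\<lambda>j. foldr (\<circ>) (map (gen_lin \<alpha> \<theta>) (take j w)) id
                                    (aff_simple \<alpha> \<theta> (w ! j))) [0..<length w]"

definition word_operator :: "('a \<Rightarrow> 'v \<Rightarrow> 'v) \<Rightarrow> (nat \<Rightarrow> 'a::euclidean_space) \<Rightarrow> 'a \<Rightarrow> nat list \<Rightarrow> 'v \<Rightarrow> 'v" where
  "word_operator R \<alpha> \<theta> w = fold (\<lambda>\<beta> acc. R \<beta> \<circ> acc) (word_roots \<alpha> \<theta> w) id"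

fun alt_prod :: "'a::euclidean_space \<Rightarrow> 'a \<Rightarrow> nat \<Rightarrow> 'a \<Rightarrow> 'a" where
  "alt_prod a b 0 = id"
| "alt_prod a b (Suc k) = refl a \<circ> alt_prod b a k"

definition dihedral_m :: "'a::euclidean_space \<Rightarrow> 'a \<Rightarrow> nat" where
  "dihedral_m a b = (LEAST n. n > 0 \<and> (refl a \<circ> refl b) ^^ n = id)"

definition rank2_roots :: "'a::euclidean_space \<Rightarrow> 'a \<Rightarrow> 'a list" where
  "rank2_roots a b = map (\<lambda>k. alt_prod a b k (if even k then a else b)) [0..<dihedral_m a b]"

definition R_matrix :: "('k::field \<Rightarrow> 'v::ab_group_add \<Rightarrow> 'v) \<Rightarrow> 'a::euclidean_space set \<Rightarrow> ('a \<Rightarrow> 'v \<Rightarrow> 'v) \<Rightarrow> bool" where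
  "R_matrix sc \<Phi> R \<longleftrightarrow>
     (\<forall>\<alpha>\<in>\<Phi>. Vector_Spaces.linear sc sc (R \<alpha>) \<and> bij (R \<alpha>)) \<and>
     (\<forall>\<alpha>\<in>\<Phi>. R (- \<alpha>) = inv (R \<alpha>)) \<and>
     (\<forall>a\<in>\<Phi>. \<forall>b\<in>\<Phi>. a \<bullet> b \<le> 0 \<and> b \<noteq> - a \<longrightarrow>
        fold (\<lambda>\<gamma> acc. acc \<circ> R \<gamma>) (rank2_roots a b) id
        = fold (\<lambda>\<gamma> acc. R \<gamma> \<circ> acc) (rank2_roots a b) id)"

end

theory Submission
  imports Defs
begin

text \<open>
  The affine Weyl group acts on the affine roots \<lambda> \<mapsto> (\<lambda>, \<beta>^\<or>) - k. Every affine root is a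
  nonnegative or a nonpositive combination of the simple affine roots a_0, ..., a_r, and s_j
  permutes the positive ones other than a_j; this gives the exchange condition and with it the
  combinatorics of reduced words.

  If w s_j is shorter than w for a reduced word w, the exchange condition rewrites w as a reduced
  word w' j whose last root is - w(\<alpha>_j); appending j to w therefore gives the operator
  R_{w(\<alpha>_j)} R_{-w(\<alpha>_j)} R_{w'} = R_{w'}. Hence every word has the operator of a reduced word. Two reduced
  words of the same element give the same operator by the inductive argument behind Matsumoto's
  theorem, which reduces everything to two alternating reduced words s t s ... = t s t ... of a
  common length m. That length is the order m_{st} of s_s s_t, the two root sequences are
  reverses of each other, and after conjugation by the common prefix they are the rank 2 root
  sequence of a pair of obtuse roots, where the Yang-Baxter equation applies.
\<close>

lemma coroot_uminus: "coroot (- x) = - coroot (x::'a::euclidean_space)"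
  by (simp add: coroot_def)

lemma coroot_eq_0_iff: "coroot (x::'a::euclidean_space) = 0 \<longleftrightarrow> x = 0"
  by (simp add: coroot_def)

lemma coroot_coroot: "(x::'a::euclidean_space) \<noteq> 0 \<Longrightarrow> coroot (coroot x) = x"
  by (simp add: coroot_def field_simps power2_eq_square)

lemma coroot_scaleR: "c \<noteq> 0 \<Longrightarrow> coroot (c *\<^sub>R x) = (1 / c) *\<^sub>R coroot (x::'a::euclidean_space)"
  by (simp add: coroot_def power2_eq_square field_simps)

lemma inner_coroot_self: "(x::'a::euclidean_space) \<noteq> 0 \<Longrightarrow> x \<bullet> coroot x = 2"
  by (simp add: coroot_def)

lemma refl_conv_coroot: "refl a x = x - (x \<bullet> a) *\<^sub>R coroot a"
  by (simp add: refl_def coroot_def algebra_simps)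

lemma linear_refl: "linear (refl a)"
  by (rule linearI) (simp_all add: refl_def inner_add_left algebra_simps)

lemma refl_self: "a \<noteq> 0 \<Longrightarrow> refl a a = - a"
  by (simp add: refl_def inner_coroot_self scaleR_2)

lemma refl_refl: "(a::'a::euclidean_space) \<noteq> 0 \<Longrightarrow> refl a (refl a x) = x"
proof -
  assume "a \<noteq> 0"
  have "refl a (refl a x) = refl a x - (x \<bullet> coroot a) *\<^sub>R refl a a"
    by (subst refl_def[of a x]) (simp add: linear_diff[OF linear_refl] linear_scale[OF linear_refl])
  also have "\<dots> = x" using \<open>a \<noteq> 0\<close> by (simp add: refl_self) (simp add: refl_def)
  finally show ?thesis .
qed

lemma inner_refl_refl: "(a::'a::euclidean_space) \<noteq> 0 \<Longrightarrow> refl a x \<bullet> refl a y = x \<bullet> y"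
  by (simp add: refl_def coroot_def inner_diff_left inner_diff_right algebra_simps power2_eq_square)
     (simp add: field_simps inner_commute)

lemma coroot_isometry:
  assumes "linear L" "\<And>x y. L x \<bullet> L y = x \<bullet> y"
  shows "coroot (L x) = L (coroot x)"
  using assms by (simp add: coroot_def linear_scale)

lemma refl_isometry:
  assumes "linear L" "\<And>x y. L x \<bullet> L y = x \<bullet> y"
  shows "refl (L a) (L x) = L (refl a x)"
  using assms by (simp add: refl_def coroot_isometry linear_diff linear_scale)

lemma aff_refl_aff_refl: "(a::'a::euclidean_space) \<noteq> 0 \<Longrightarrow> aff_refl a k (aff_refl a k x) = x"
  by (simp add: aff_refl_def inner_diff_left inner_coroot_self algebra_simps)

lemma aff_refl_eq_refl_add: "aff_refl a k x = refl a x + k *\<^sub>R a"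
  by (simp add: aff_refl_def refl_def algebra_simps)

lemma sum_scaleR_delta:
  "finite A \<Longrightarrow> j \<in> A \<Longrightarrow> (\<Sum>i\<in>A. (if i = j then c else 0) *\<^sub>R (x i :: 'b::real_vector)) = c *\<^sub>R x j"
  by (simp add: if_distrib[of "\<lambda>c. c *\<^sub>R _"] sum.delta cong: if_cong)

lemma fold_comp_init:
  fixes R :: "'x \<Rightarrow> 'v \<Rightarrow> 'v" and f :: "'v \<Rightarrow> 'v"
  shows "fold (\<lambda>\<beta> acc. R \<beta> \<circ> acc) L f = fold (\<lambda>\<beta> acc. R \<beta> \<circ> acc) L id \<circ> f"
proof (induction L arbitrary: f)
  case Nil then show ?case by simp
next
  case (Cons a L)
  have "fold (\<lambda>\<beta> acc. R \<beta> \<circ> acc) (a # L) f = fold (\<lambda>\<beta> acc. R \<beta> \<circ> acc) L (R a \<circ> f)" by simp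
  also have "\<dots> = fold (\<lambda>\<beta> acc. R \<beta> \<circ> acc) L id \<circ> (R a \<circ> f)" by (rule Cons)
  also have "\<dots> = (fold (\<lambda>\<beta> acc. R \<beta> \<circ> acc) L id \<circ> R a) \<circ> f" by (simp only: comp_assoc)
  also have "fold (\<lambda>\<beta> acc. R \<beta> \<circ> acc) L id \<circ> R a = fold (\<lambda>\<beta> acc. R \<beta> \<circ> acc) L (R a)"
    by (rule Cons[of "R a", symmetric])
  also have "\<dots> = fold (\<lambda>\<beta> acc. R \<beta> \<circ> acc) (a # L) id" by simp
  finally show ?case .
qed

lemma fold_comp_rev:
  fixes R :: "'x \<Rightarrow> 'v \<Rightarrow> 'v"
  shows "fold (\<lambda>\<beta> acc. R \<beta> \<circ> acc) (rev L) id = fold (\<lambda>\<beta> acc. acc \<circ> R \<beta>) L id"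
proof -
  have "fold (\<lambda>\<beta> acc. acc \<circ> R \<beta>) L f = f \<circ> fold (\<lambda>\<beta> acc. R \<beta> \<circ> acc) (rev L) id" for f :: "'v \<Rightarrow> 'v"
    by (induction L arbitrary: f) (simp_all add: fold_comp_init[of R _ "R _"] comp_assoc)
  from this[of id] show ?thesis by simp
qed

fun alt_word :: "nat \<Rightarrow> nat \<Rightarrow> nat \<Rightarrow> nat list" where
  "alt_word s t 0 = []"
| "alt_word s t (Suc n) = s # alt_word t s n"

lemma length_alt_word [simp]: "length (alt_word s t n) = n"
  by (induction n arbitrary: s t) auto

lemma alt_word_snoc: "alt_word s t (Suc n) = alt_word s t n @ [if even n then s else t]"
  by (induction n arbitrary: s t) auto

lemma alt_word_add:
  "alt_word s t (n + k) = alt_word s t n @ (if even n then alt_word s t k else alt_word t s k)"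
  by (induction n arbitrary: s t) auto

lemma rev_alt_word: "rev (alt_word s t n) = (if even n then alt_word t s n else alt_word s t n)"
proof (induction n arbitrary: s t)
  case 0 then show ?case by simp
next
  case (Suc n)
  have "rev (alt_word s t (Suc n)) = (if even n then alt_word s t n else alt_word t s n) @ [s]"
    using Suc.IH[of t s] by simp
  also have "\<dots> = (if even (Suc n) then alt_word t s (Suc n) else alt_word s t (Suc n))"
    unfolding alt_word_snoc[of s t n] alt_word_snoc[of t s n] by auto
  finally show ?case .
qed

lemma set_alt_word: "set (alt_word s t n) \<subseteq> {s, t}"
  by (induction n arbitrary: s t) auto

lemma take_alt_word: "j \<le> n \<Longrightarrow> take j (alt_word s t n) = alt_word s t j"
  by (induction n arbitrary: s t j) (auto simp: take_Cons split: nat.split)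

lemma nth_alt_word: "j < n \<Longrightarrow> alt_word s t n ! j = (if even j then s else t)"
  by (induction n arbitrary: s t j) (auto simp: nth_Cons split: nat.split)

lemma alt_word_palindrome:
  "alt_word s t n @ [if even n then s else t] @ rev (alt_word s t n) = alt_word s t (2 * n + 1)"
proof -
  have "alt_word s t (2 * n + 1) = alt_word s t (Suc n + n)" by (rule arg_cong[of _ _ "alt_word s t"]) simp
  also have "\<dots> = (alt_word s t n @ [if even n then s else t])
      @ (if even (Suc n) then alt_word s t n else alt_word t s n)"
    by (simp only: alt_word_add alt_word_snoc)
  finally show ?thesis by (cases "even n") (simp_all del: alt_word.simps add: rev_alt_word)
qed

definition delete_at :: "nat \<Rightarrow> 'a list \<Rightarrow> 'a list" where
  "delete_at p w = take p w @ drop (Suc p) w"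

lemma set_delete_at_subset: "set (delete_at p w) \<subseteq> set w"
  using set_take_subset[of p w] set_drop_subset[of "Suc p" w] by (auto simp: delete_at_def)

lemma length_delete_at: "p < length w \<Longrightarrow> length (delete_at p w) = length w - 1"
  by (simp add: delete_at_def)

lemma delete_at_0: "delete_at 0 w = tl w"
  by (simp add: delete_at_def drop_Suc)

lemma delete_at_Cons_Suc: "delete_at (Suc p) (c # w) = c # delete_at p w"
  by (simp add: delete_at_def)

text \<open>
  The words B, A, tl A y, drop 2 A y x, drop 3 A y x y, ..., alt_word y x (length A) through
  which Matsumoto's argument passes from B to A.
\<close>
definition chain_word :: "nat list \<Rightarrow> nat list \<Rightarrow> nat \<Rightarrow> nat \<Rightarrow> nat \<Rightarrow> nat list" where
  "chain_word A B x y n = (if n = 0 then B else drop (n - 1) A @ alt_word y x (n - 1))"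

lemma length_chain_word:
  "n \<le> length A + 1 \<Longrightarrow> length B = length A \<Longrightarrow> length (chain_word A B x y n) = length A"
  by (simp add: chain_word_def)

lemma set_chain_word: "set (chain_word A B x y n) \<subseteq> set A \<union> set B \<union> {x, y}"
  using set_drop_subset[of "n - 1" A] set_alt_word[of y x "n - 1"] by (auto simp: chain_word_def)

lemma chain_word_snoc:
  assumes "A = A' @ [x]" "B = B' @ [y]"
  obtains P where "chain_word A B x y n = P @ [if even n then y else x]"
proof (cases n)
  case 0 then show ?thesis using that assms(2) by (simp add: chain_word_def)
next
  case (Suc j)
  show ?thesis
  proof (cases j)
    case 0 then show ?thesis using that Suc assms(1) by (simp add: chain_word_def)
  next
    case (Suc i)
    then have "chain_word A B x y n = (drop (n - 1) A @ alt_word y x i) @ [if even n then y else x]"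
      using \<open>n = Suc j\<close> by (simp add: chain_word_def alt_word_snoc[of y x i] del: alt_word.simps)
    then show ?thesis by (rule that)
  qed
qed

lemma chain_word_Suc:
  assumes "1 \<le> n" "n \<le> length A"
  shows "chain_word A B x y (Suc n) = tl (chain_word A B x y n) @ [if even n then x else y]"
proof -
  obtain j where j: "n = Suc j" using assms(1) by (cases n) auto
  have "tl (chain_word A B x y n) = tl (drop j A) @ alt_word y x j"
    using assms j by (simp add: chain_word_def)
  also have "tl (drop j A) = drop n A" using j by (simp add: drop_Suc tl_drop)
  finally show ?thesis
    using j by (simp add: chain_word_def alt_word_snoc[of y x j] del: alt_word.simps)
qed

lemma chain_word_Suc_length: "chain_word A B x y (Suc (length A)) = alt_word y x (length A)"
  by (simp add: chain_word_def)

lemma chain_word_length: "A = A' @ [x] \<Longrightarrow> chain_word A B x y (length A) = alt_word x y (length A)"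
  by (simp add: chain_word_def)

locale affine_root_datum =
  fixes \<Phi> :: "'a::euclidean_space set" and r :: nat and \<alpha> :: "nat \<Rightarrow> 'a" and \<theta> :: 'a
  assumes root_system: "root_system \<Phi>" and simple_roots: "simple_roots \<Phi> r \<alpha>"
    and highest_coroot: "highest_coroot_root \<Phi> r \<alpha> \<theta>"
begin

lemma refl_root: "a \<in> \<Phi> \<Longrightarrow> b \<in> \<Phi> \<Longrightarrow> refl a b \<in> \<Phi>"
  using root_system by (simp add: root_system_def)

lemma inner_coroot_Ints: "a \<in> \<Phi> \<Longrightarrow> b \<in> \<Phi> \<Longrightarrow> b \<bullet> coroot a \<in> \<int>"
  using root_system by (simp add: root_system_def)

lemma root_multiple: "a \<in> \<Phi> \<Longrightarrow> c *\<^sub>R a \<in> \<Phi> \<Longrightarrow> c = 1 \<or> c = -1"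
  using root_system by (simp add: root_system_def)

lemma root_nonzero: "a \<in> \<Phi> \<Longrightarrow> a \<noteq> 0"
  using root_system by (auto simp: root_system_def)

lemma uminus_root: "a \<in> \<Phi> \<Longrightarrow> - a \<in> \<Phi>"
  using refl_root[of a a] refl_self[of a] root_nonzero by auto

lemma alpha_mem: "i \<in> {1..r} \<Longrightarrow> \<alpha> i \<in> \<Phi>"
  using simple_roots by (auto simp: simple_roots_def)

lemma alpha_nonzero: "i \<in> {1..r} \<Longrightarrow> \<alpha> i \<noteq> 0"
  using alpha_mem root_nonzero by auto

lemma highest_root_mem: "\<theta> \<in> \<Phi>"
  using highest_coroot by (simp add: highest_coroot_root_def)

lemma alpha_combination_eq_0:
  assumes "(\<Sum>i=1..r. c i *\<^sub>R \<alpha> i) = 0" "i \<in> {1..r}" shows "c i = 0"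
proof -
  have inj: "inj_on \<alpha> {1..r}" and ind: "independent (\<alpha> ` {1..r})"
    using simple_roots by (auto simp: simple_roots_def)
  define u where "u = (\<lambda>v. c (the_inv_into {1..r} \<alpha> v))"
  have "(\<Sum>v\<in>\<alpha> ` {1..r}. u v *\<^sub>R v) = (\<Sum>i=1..r. c i *\<^sub>R \<alpha> i)"
    using inj by (simp add: sum.reindex u_def the_inv_into_f_f)
  with ind assms(1) have "\<forall>v\<in>\<alpha> ` {1..r}. u v = 0"
    using real_vector.dependent_finite[of "\<alpha> ` {1..r}"] by auto
  then have "u (\<alpha> i) = 0" using assms(2) by blast
  then show ?thesis using the_inv_into_f_f[OF inj assms(2)] by (simp add: u_def)
qed

lemma alpha_coeffs_unique:
  assumes "(\<Sum>i=1..r. c i *\<^sub>R \<alpha> i) = (\<Sum>i=1..r. d i *\<^sub>R \<alpha> i)" "i \<in> {1..r}" shows "c i = d i"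
proof -
  have "(\<Sum>i=1..r. (c i - d i) *\<^sub>R \<alpha> i) = 0"
    using assms(1) by (simp add: scaleR_diff_left sum_subtractf)
  from alpha_combination_eq_0[OF this assms(2)] show ?thesis by simp
qed

lemma alpha_coroot_coeffs_unique:
  assumes "(\<Sum>i=1..r. c i *\<^sub>R coroot (\<alpha> i)) = (\<Sum>i=1..r. d i *\<^sub>R coroot (\<alpha> i))" "i \<in> {1..r}"
  shows "c i = d i"
proof -
  have "(\<Sum>i=1..r. (c i * (2 / (\<alpha> i \<bullet> \<alpha> i))) *\<^sub>R \<alpha> i) = (\<Sum>i=1..r. (d i * (2 / (\<alpha> i \<bullet> \<alpha> i))) *\<^sub>R \<alpha> i)"
    using assms(1) by (simp add: coroot_def)
  from alpha_coeffs_unique[OF this assms(2)] show ?thesis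
    using alpha_nonzero[OF assms(2)] by simp
qed

lemma root_expansion:
  assumes "\<beta> \<in> \<Phi>"
  obtains c :: "nat \<Rightarrow> real" where "\<beta> = (\<Sum>i=1..r. c i *\<^sub>R \<alpha> i)"
    "(\<forall>i\<in>{1..r}. c i \<ge> 0) \<or> (\<forall>i\<in>{1..r}. c i \<le> 0)"
proof -
  from simple_roots assms obtain c :: "nat \<Rightarrow> int" where "\<beta> = (\<Sum>i=1..r. of_int (c i) *\<^sub>R \<alpha> i)"
    "(\<forall>i\<in>{1..r}. c i \<ge> 0) \<or> (\<forall>i\<in>{1..r}. c i \<le> 0)"
    unfolding simple_roots_def by blast
  then show ?thesis using that[of "\<lambda>i. of_int (c i)"] by auto
qed

lemma highest_coroot_diff:
  assumes "\<beta> \<in> \<Phi>"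
  obtains c :: "nat \<Rightarrow> real" where "coroot \<theta> - coroot \<beta> = (\<Sum>i=1..r. c i *\<^sub>R coroot (\<alpha> i))"
    "\<forall>i. c i \<ge> 0"
proof -
  from highest_coroot assms obtain c :: "nat \<Rightarrow> nat"
    where "coroot \<theta> - coroot \<beta> = (\<Sum>i=1..r. of_nat (c i) *\<^sub>R coroot (\<alpha> i))"
    unfolding highest_coroot_root_def by blast
  then show ?thesis using that[of "\<lambda>i. of_nat (c i)"] by auto
qed

lemma highest_coroot_expansion:
  obtains e :: "nat \<Rightarrow> real" where "coroot \<theta> = (\<Sum>i=1..r. e i *\<^sub>R coroot (\<alpha> i))" "\<forall>i. e i \<ge> 0"
proof -
  obtain c where c: "coroot \<theta> - coroot (- \<theta>) = (\<Sum>i=1..r. c i *\<^sub>R coroot (\<alpha> i))" "\<forall>i. c i \<ge> 0"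
    using highest_coroot_diff[OF uminus_root[OF highest_root_mem]] by blast
  have "coroot \<theta> = (1/2) *\<^sub>R (coroot \<theta> - coroot (- \<theta>))" by (simp add: coroot_uminus)
  also have "\<dots> = (\<Sum>i=1..r. (c i / 2) *\<^sub>R coroot (\<alpha> i))" using c(1) by (simp add: scaleR_sum_right)
  finally show ?thesis using that[of "\<lambda>i. c i / 2"] c(2) by auto
qed

lemma coroot_nonneg_expansion:
  assumes "\<beta> = (\<Sum>i=1..r. c i *\<^sub>R \<alpha> i)" "\<forall>i\<in>{1..r}. c i \<ge> 0" "\<beta> \<noteq> 0"
  obtains d where "coroot \<beta> = (\<Sum>i=1..r. d i *\<^sub>R coroot (\<alpha> i))" "\<forall>i\<in>{1..r}. d i \<ge> 0"
proof
  let ?d = "\<lambda>i. c i * (\<alpha> i \<bullet> \<alpha> i) / (\<beta> \<bullet> \<beta>)"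
  show "\<forall>i\<in>{1..r}. ?d i \<ge> 0" using assms(2) by auto
  have "(\<Sum>i=1..r. ?d i *\<^sub>R coroot (\<alpha> i)) = (\<Sum>i=1..r. (2 / (\<beta> \<bullet> \<beta>)) *\<^sub>R (c i *\<^sub>R \<alpha> i))"
    by (rule sum.cong) (auto simp: coroot_def alpha_nonzero)
  also have "\<dots> = coroot \<beta>" by (simp add: coroot_def assms(1) scaleR_sum_right)
  finally show "coroot \<beta> = (\<Sum>i=1..r. ?d i *\<^sub>R coroot (\<alpha> i))" by simp
qed

lemma inner_alpha_nonpos:
  assumes "i \<in> {1..r}" "j \<in> {1..r}" "i \<noteq> j" shows "\<alpha> j \<bullet> \<alpha> i \<le> 0"
proof -
  let ?t = "\<alpha> j \<bullet> coroot (\<alpha> i)"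
  have "refl (\<alpha> i) (\<alpha> j) \<in> \<Phi>" using refl_root alpha_mem assms by auto
  then obtain c where c: "refl (\<alpha> i) (\<alpha> j) = (\<Sum>k=1..r. c k *\<^sub>R \<alpha> k)"
    "(\<forall>k\<in>{1..r}. c k \<ge> 0) \<or> (\<forall>k\<in>{1..r}. c k \<le> 0)" by (rule root_expansion)
  let ?d = "\<lambda>k. (if k = j then 1 else 0) - (if k = i then ?t else 0)"
  have "refl (\<alpha> i) (\<alpha> j) = (\<Sum>k=1..r. ?d k *\<^sub>R \<alpha> k)"
    using assms by (simp add: refl_def scaleR_diff_left sum_subtractf sum_scaleR_delta)
  with c(1) have eq: "(\<Sum>k=1..r. c k *\<^sub>R \<alpha> k) = (\<Sum>k=1..r. ?d k *\<^sub>R \<alpha> k)" by simp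
  have "c j = 1" "c i = - ?t" using alpha_coeffs_unique[OF eq] assms by auto
  with c(2) assms have "?t \<le> 0" by force
  moreover have "\<alpha> i \<bullet> \<alpha> i > 0" using alpha_nonzero[OF assms(1)] by simp
  ultimately show ?thesis by (simp add: coroot_def divide_le_0_iff zero_le_mult_iff mult_le_0_iff)
qed

lemma inner_highest_alpha_nonneg:
  assumes "i \<in> {1..r}" shows "\<theta> \<bullet> \<alpha> i \<ge> 0"
proof -
  have ai: "\<alpha> i \<in> \<Phi>" using alpha_mem assms by auto
  then obtain c where c: "coroot \<theta> - coroot (refl (\<alpha> i) \<theta>) = (\<Sum>k=1..r. c k *\<^sub>R coroot (\<alpha> k))"
    "\<forall>k. c k \<ge> 0"
    using highest_coroot_diff refl_root highest_root_mem by blast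
  have "coroot (refl (\<alpha> i) \<theta>) = refl (\<alpha> i) (coroot \<theta>)"
    by (rule coroot_isometry[OF linear_refl inner_refl_refl[OF root_nonzero[OF ai]]])
  then have "coroot \<theta> - coroot (refl (\<alpha> i) \<theta>)
      = (\<Sum>k=1..r. (if k = i then coroot \<theta> \<bullet> \<alpha> i else 0) *\<^sub>R coroot (\<alpha> k))"
    using assms by (simp add: refl_conv_coroot sum_scaleR_delta)
  with c(1) have "(\<Sum>k=1..r. c k *\<^sub>R coroot (\<alpha> k))
      = (\<Sum>k=1..r. (if k = i then coroot \<theta> \<bullet> \<alpha> i else 0) *\<^sub>R coroot (\<alpha> k))" by simp
  from alpha_coroot_coeffs_unique[OF this assms] have "c i = coroot \<theta> \<bullet> \<alpha> i" by simp
  then have "coroot \<theta> \<bullet> \<alpha> i \<ge> 0" using c(2)[rule_format, of i] by simp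
  moreover have "\<theta> \<bullet> \<theta> > 0" using root_nonzero[OF highest_root_mem] by simp
  ultimately show ?thesis by (simp add: coroot_def zero_le_divide_iff zero_le_mult_iff)
qed

lemma highest_root_neq_uminus_alpha:
  assumes "i \<in> {1..r}" shows "\<theta> \<noteq> - \<alpha> i"
proof
  assume th: "\<theta> = - \<alpha> i"
  obtain c where c: "coroot \<theta> - coroot (\<alpha> i) = (\<Sum>k=1..r. c k *\<^sub>R coroot (\<alpha> k))" "\<forall>k. c k \<ge> 0"
    using highest_coroot_diff alpha_mem assms by blast
  have "coroot \<theta> - coroot (\<alpha> i) = (\<Sum>k=1..r. (if k = i then -2 else 0) *\<^sub>R coroot (\<alpha> k))"
    using assms th by (simp add: coroot_uminus sum_scaleR_delta scaleR_2)
  with c(1) have "(\<Sum>k=1..r. c k *\<^sub>R coroot (\<alpha> k))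
      = (\<Sum>k=1..r. (if k = i then -2 else 0) *\<^sub>R coroot (\<alpha> k))" by simp
  from alpha_coroot_coeffs_unique[OF this assms] have "c i = -2" by simp
  then show False using c(2) by (metis neg_0_le_iff_le zero_le_numeral not_numeral_le_zero)
qed

section \<open>The affine Weyl group and affine roots\<close>

abbreviation simple_root :: "nat \<Rightarrow> 'a" where "simple_root \<equiv> aff_simple \<alpha> \<theta>"
abbreviation elem :: "nat list \<Rightarrow> 'a \<Rightarrow> 'a" where "elem \<equiv> word_elem \<alpha> \<theta>"
abbreviation is_word :: "nat list \<Rightarrow> bool" where "is_word w \<equiv> set w \<subseteq> {0..r}"

definition word_lin :: "nat list \<Rightarrow> 'a \<Rightarrow> 'a" where
  "word_lin w = foldr (\<circ>) (map (gen_lin \<alpha> \<theta>) w) id"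

text \<open>
  A pair (c, k) stands for the affine function \<lambda> \<mapsto> (\<lambda>, c) - k, evaluated by aff_eval; the simple
  affine root a_i vanishes exactly on the mirror of the generator s_i. The affine Weyl group acts
  on such functions by f \<mapsto> f \<circ> w\<inverse>, and aff_root_refl i is the action of s_i.
\<close>
definition aff_simple_root :: "nat \<Rightarrow> 'a \<times> real" where
  "aff_simple_root i = (coroot (simple_root i), if i = 0 then -1 else 0)"

definition aff_eval :: "'a \<times> real \<Rightarrow> 'a \<Rightarrow> real" where
  "aff_eval x l = l \<bullet> fst x - snd x"

definition aff_root_refl :: "nat \<Rightarrow> 'a \<times> real \<Rightarrow> 'a \<times> real" where
  "aff_root_refl i x = x - (fst x \<bullet> simple_root i) *\<^sub>R aff_simple_root i"

definition word_act :: "nat list \<Rightarrow> 'a \<times> real \<Rightarrow> 'a \<times> real" where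
  "word_act w x = foldr aff_root_refl w x"

definition aff_roots :: "('a \<times> real) set" where
  "aff_roots = {(coroot \<beta>, of_int k) | \<beta> k. \<beta> \<in> \<Phi>}"

definition aff_pos :: "'a \<times> real \<Rightarrow> bool" where
  "aff_pos x \<longleftrightarrow> (\<exists>n. (\<forall>i\<in>{0..r}. n i \<ge> 0) \<and> x = (\<Sum>i=0..r. n i *\<^sub>R aff_simple_root i))"

lemma simple_root_mem: "i \<le> r \<Longrightarrow> simple_root i \<in> \<Phi>"
  using alpha_mem highest_root_mem uminus_root by (auto simp: aff_simple_def)

lemma simple_root_nonzero: "i \<le> r \<Longrightarrow> simple_root i \<noteq> 0"
  using simple_root_mem root_nonzero by blast

lemma simple_root_alpha: "i \<in> {1..r} \<Longrightarrow> simple_root i = \<alpha> i"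
  by (auto simp: aff_simple_def)

lemma simple_root_0: "simple_root 0 = - \<theta>"
  by (simp add: aff_simple_def)

lemma gen_eq_aff_refl: "gen \<alpha> \<theta> i = aff_refl (simple_root i) (if i = 0 then -1 else 0)"
  by (simp add: gen_def aff_simple_def)

lemma gen_gen: "i \<le> r \<Longrightarrow> gen \<alpha> \<theta> i (gen \<alpha> \<theta> i x) = x"
  by (simp add: gen_eq_aff_refl aff_refl_aff_refl simple_root_nonzero)

lemma gen_eq_refl_add: "gen \<alpha> \<theta> i x = refl (simple_root i) x + gen \<alpha> \<theta> i 0"
  by (simp add: gen_eq_aff_refl aff_refl_eq_refl_add refl_def)

lemma gen_eq_aff_eval: "gen \<alpha> \<theta> i l = l - aff_eval (aff_simple_root i) l *\<^sub>R simple_root i"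
  by (simp add: gen_eq_aff_refl aff_refl_def aff_eval_def aff_simple_root_def)

lemma word_elem_Nil: "elem [] = id"
  by (simp add: word_elem_def)

lemma word_elem_Cons: "elem (i # w) = gen \<alpha> \<theta> i \<circ> elem w"
  by (simp add: word_elem_def)

lemma word_elem_append: "elem (u @ w) = elem u \<circ> elem w"
  by (induction u) (auto simp: word_elem_Nil word_elem_Cons)

lemma word_elem_snoc: "elem (w @ [i]) = elem w \<circ> gen \<alpha> \<theta> i"
  by (simp add: word_elem_append word_elem_Cons word_elem_Nil)

lemma word_lin_Nil: "word_lin [] = id"
  by (simp add: word_lin_def)

lemma word_lin_Cons: "word_lin (i # w) = refl (simple_root i) \<circ> word_lin w"
  by (simp add: word_lin_def gen_lin_def)

lemma word_lin_append: "word_lin (u @ w) = word_lin u \<circ> word_lin w"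
  by (induction u) (auto simp: word_lin_Nil word_lin_Cons)

lemma word_lin_snoc: "word_lin (w @ [i]) = word_lin w \<circ> refl (simple_root i)"
  by (simp add: word_lin_append word_lin_Cons word_lin_Nil)

lemma linear_word_lin: "linear (word_lin w)"
proof (induction w)
  case Nil then show ?case unfolding word_lin_Nil by (rule linear_id)
next
  case (Cons i w) then show ?case unfolding word_lin_Cons by (rule linear_compose[OF _ linear_refl])
qed

lemma inner_word_lin: "is_word w \<Longrightarrow> word_lin w x \<bullet> word_lin w y = x \<bullet> y"
  by (induction w arbitrary: x y) (auto simp: word_lin_Nil word_lin_Cons inner_refl_refl simple_root_nonzero)

lemma word_lin_root: "is_word w \<Longrightarrow> \<beta> \<in> \<Phi> \<Longrightarrow> word_lin w \<beta> \<in> \<Phi>"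
  by (induction w) (auto simp: word_lin_Nil word_lin_Cons refl_root simple_root_mem)

lemma coroot_word_lin: "is_word w \<Longrightarrow> coroot (word_lin w x) = word_lin w (coroot x)"
  by (rule coroot_isometry[OF linear_word_lin inner_word_lin])

lemma refl_word_lin: "is_word w \<Longrightarrow> refl (word_lin w a) (word_lin w x) = word_lin w (refl a x)"
  by (rule refl_isometry[OF linear_word_lin inner_word_lin])

lemma word_lin_rev_word_lin: "is_word w \<Longrightarrow> word_lin (rev w) (word_lin w x) = x"
  by (induction w arbitrary: x) (auto simp: word_lin_Nil word_lin_Cons word_lin_snoc refl_refl simple_root_nonzero)

lemma word_lin_word_lin_rev: "is_word w \<Longrightarrow> word_lin w (word_lin (rev w) x) = x"
  using word_lin_rev_word_lin[of "rev w"] by simp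

lemma word_elem_word_elem_rev: "is_word w \<Longrightarrow> elem w (elem (rev w) x) = x"
  by (induction w arbitrary: x) (auto simp: word_elem_Nil word_elem_Cons word_elem_snoc gen_gen)

lemma word_elem_affine: "elem w x = word_lin w x + elem w 0"
proof (induction w arbitrary: x)
  case Nil then show ?case by (simp add: word_elem_Nil word_lin_Nil)
next
  case (Cons i w)
  have "elem (i # w) x = refl (simple_root i) (word_lin w x) + refl (simple_root i) (elem w 0) + gen \<alpha> \<theta> i 0"
    using Cons.IH[of x] gen_eq_refl_add[of i "word_lin w x + elem w 0"]
    by (simp add: word_elem_Cons linear_add[OF linear_refl])
  moreover have "elem (i # w) 0 = refl (simple_root i) (elem w 0) + gen \<alpha> \<theta> i 0"
    by (simp add: word_elem_Cons gen_eq_refl_add[of i "elem w 0"])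
  ultimately show ?case by (simp add: word_lin_Cons)
qed

lemma word_lin_eq_if_word_elem_eq: "elem w = elem w' \<Longrightarrow> word_lin w = word_lin w'"
  using word_elem_affine[of w] word_elem_affine[of w'] by (metis add_right_cancel ext)

lemma fst_aff_root_refl: "fst (aff_root_refl i x) = refl (simple_root i) (fst x)"
  by (simp add: aff_root_refl_def aff_simple_root_def refl_conv_coroot)

lemma word_act_Nil: "word_act [] x = x"
  by (simp add: word_act_def)

lemma word_act_Cons: "word_act (i # w) x = aff_root_refl i (word_act w x)"
  by (simp add: word_act_def)

lemma word_act_snoc: "word_act (w @ [i]) x = word_act w (aff_root_refl i x)"
  by (simp add: word_act_def)

lemma fst_word_act: "fst (word_act w x) = word_lin w (fst x)"
  by (induction w) (auto simp: word_act_Nil word_act_Cons word_lin_Nil word_lin_Cons fst_aff_root_refl)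

lemma aff_eval_aff_root_refl:
  assumes "i \<le> r" shows "aff_eval (aff_root_refl i x) (gen \<alpha> \<theta> i l) = aff_eval x l"
proof -
  let ?g = "simple_root i" let ?a = "aff_simple_root i"
  have g: "?g \<bullet> coroot ?g = 2" using inner_coroot_self simple_root_nonzero assms by blast
  have e1: "aff_eval (aff_root_refl i x) m = aff_eval x m - (fst x \<bullet> ?g) * aff_eval ?a m" for m
    by (simp add: aff_eval_def aff_root_refl_def inner_diff_right algebra_simps)
  have e2: "aff_eval y (gen \<alpha> \<theta> i l) = aff_eval y l - aff_eval ?a l * (fst y \<bullet> ?g)" for y
    by (simp add: gen_eq_aff_eval aff_eval_def inner_diff_right inner_commute algebra_simps)
  have e3: "aff_eval ?a (gen \<alpha> \<theta> i l) = - aff_eval ?a l"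
    using e2[of ?a] g by (simp add: aff_simple_root_def inner_commute algebra_simps)
  show ?thesis unfolding e1 e2[of x] e3 by (simp add: algebra_simps)
qed

lemma aff_eval_word_act: "is_word w \<Longrightarrow> aff_eval (word_act w x) (elem w l) = aff_eval x l"
  by (induction w arbitrary: l) (auto simp: word_act_Nil word_act_Cons word_elem_Nil word_elem_Cons aff_eval_aff_root_refl)

lemma aff_eval_inject: assumes "\<And>l. aff_eval x l = aff_eval y l" shows "x = y"
proof -
  have s: "snd x = snd y" using assms[of 0] by (simp add: aff_eval_def)
  have "l \<bullet> (fst x - fst y) = 0" for l using assms[of l] s by (simp add: aff_eval_def inner_diff_right)
  from this[of "fst x - fst y"] s show ?thesis by (simp add: prod_eq_iff)
qed

lemma word_act_eq_if_word_elem_eq: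
  assumes "is_word w" "is_word w'" "elem w = elem w'" shows "word_act w x = word_act w' x"
proof (rule aff_eval_inject)
  fix l
  let ?m = "elem (rev w) l"
  have l: "l = elem w ?m" using word_elem_word_elem_rev assms(1) by simp
  have "aff_eval (word_act w x) (elem w ?m) = aff_eval (word_act w' x) (elem w' ?m)"
    using aff_eval_word_act assms(1,2) by simp
  then show "aff_eval (word_act w x) l = aff_eval (word_act w' x) l" using l assms(3) by simp
qed

lemma word_act_add: "word_act w (x + y) = word_act w x + word_act w y"
  by (induction w) (auto simp: word_act_Nil word_act_Cons aff_root_refl_def inner_add_left algebra_simps)

lemma word_act_uminus: "word_act w (- x) = - word_act w x"
  by (induction w) (auto simp: word_act_Nil word_act_Cons aff_root_refl_def algebra_simps)

lemma inner_coroot_simple_root_self: "i \<le> r \<Longrightarrow> coroot (simple_root i) \<bullet> simple_root i = 2"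
  using inner_coroot_self simple_root_nonzero by (metis inner_commute)

lemma aff_root_refl_self: "i \<le> r \<Longrightarrow> aff_root_refl i (aff_simple_root i) = - aff_simple_root i"
  by (simp add: aff_root_refl_def aff_simple_root_def inner_coroot_simple_root_self scaleR_2 algebra_simps)

lemma aff_root_refl_aff_root_refl: "i \<le> r \<Longrightarrow> aff_root_refl i (aff_root_refl i x) = x"
  by (simp add: aff_root_refl_def aff_simple_root_def inner_diff_left inner_coroot_simple_root_self)

lemma aff_root_refl_mem: assumes "i \<le> r" "x \<in> aff_roots" shows "aff_root_refl i x \<in> aff_roots"
proof -
  obtain \<beta> k where x: "x = (coroot \<beta>, of_int k)" "\<beta> \<in> \<Phi>" using assms(2) by (auto simp: aff_roots_def)
  have si: "simple_root i \<in> \<Phi>" using simple_root_mem assms(1) by blast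
  then have "simple_root i \<bullet> coroot \<beta> \<in> \<int>" using inner_coroot_Ints x(2) by blast
  then obtain z where z: "simple_root i \<bullet> coroot \<beta> = of_int z" by (auto elim: Ints_cases)
  have "fst (aff_root_refl i x) = coroot (refl (simple_root i) \<beta>)"
    using x by (simp add: fst_aff_root_refl coroot_isometry[OF linear_refl inner_refl_refl[OF root_nonzero[OF si]]])
  moreover have "snd (aff_root_refl i x) = of_int (k - z * (if i = 0 then -1 else 0))"
    using x z by (simp add: aff_root_refl_def aff_simple_root_def inner_commute)
  ultimately have "aff_root_refl i x = (coroot (refl (simple_root i) \<beta>), of_int (k - z * (if i = 0 then -1 else 0)))"
    by (simp add: prod_eq_iff)
  moreover have "refl (simple_root i) \<beta> \<in> \<Phi>" using refl_root si x(2) by blast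
  ultimately show ?thesis unfolding aff_roots_def by blast
qed

lemma word_act_mem: "is_word w \<Longrightarrow> x \<in> aff_roots \<Longrightarrow> word_act w x \<in> aff_roots"
  by (induction w) (auto simp: word_act_Nil word_act_Cons aff_root_refl_mem)

lemma aff_simple_root_mem: "i \<le> r \<Longrightarrow> aff_simple_root i \<in> aff_roots"
  unfolding aff_roots_def aff_simple_root_def using simple_root_mem
  by (intro CollectI exI[of _ "simple_root i"] exI[of _ "if i = 0 then -1 else 0"]) auto

lemma aff_roots_nonzero: "x \<in> aff_roots \<Longrightarrow> x \<noteq> 0"
  by (auto simp: aff_roots_def zero_prod_def coroot_eq_0_iff dest: root_nonzero)

section \<open>Positive affine roots\<close>

lemma aff_simple_root_0: "aff_simple_root 0 = (- coroot \<theta>, -1)"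
  by (simp add: aff_simple_root_def simple_root_0 coroot_uminus)

lemma aff_simple_root_alpha: "i \<in> {1..r} \<Longrightarrow> aff_simple_root i = (coroot (\<alpha> i), 0)"
  by (auto simp: aff_simple_root_def simple_root_alpha)

lemma sum_aff_simple_roots:
  "(\<Sum>i=0..r. n i *\<^sub>R aff_simple_root i)
    = (- n 0 *\<^sub>R coroot \<theta> + (\<Sum>i=1..r. n i *\<^sub>R coroot (\<alpha> i)), - n 0)"
proof -
  have "(\<Sum>i=1..r. n i *\<^sub>R aff_simple_root i) = (\<Sum>i=1..r. (n i *\<^sub>R coroot (\<alpha> i), 0))"
    by (rule sum.cong) (simp_all add: aff_simple_root_alpha)
  also have "\<dots> = ((\<Sum>i=1..r. n i *\<^sub>R coroot (\<alpha> i)), 0)"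
    by (simp add: prod_eq_iff fst_sum snd_sum)
  finally show ?thesis by (simp add: sum.atLeast_Suc_atMost aff_simple_root_0)
qed

lemma aff_simple_roots_independent:
  assumes "(\<Sum>i=0..r. n i *\<^sub>R aff_simple_root i) = 0" "i \<in> {0..r}" shows "n i = 0"
proof -
  from assms(1) have n0: "n 0 = 0" by (simp add: sum_aff_simple_roots zero_prod_def)
  with assms(1) have eq: "(\<Sum>i=1..r. n i *\<^sub>R coroot (\<alpha> i)) = (\<Sum>i=1..r. 0 *\<^sub>R coroot (\<alpha> i))"
    by (simp add: sum_aff_simple_roots zero_prod_def)
  show ?thesis
  proof (cases "i = 0")
    case False
    then have "i \<in> {1..r}" using assms(2) by auto
    from alpha_coroot_coeffs_unique[OF eq this] show ?thesis by simp
  qed (simp add: n0)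
qed

text \<open>
  (\<beta>^\<or>, k) = -k a_0 + (\<theta>^\<or> + \<beta>^\<or>, 0) + (-k - 1) (\<theta>^\<or>, 0), and \<theta>^\<or> + \<beta>^\<or> = \<theta>^\<or> - (-\<beta>)^\<or> and
  \<theta>^\<or> are nonnegative combinations of simple coroots.
\<close>
lemma aff_pos_level_neg:
  assumes "\<beta> \<in> \<Phi>" "k \<le> -1" shows "aff_pos (coroot \<beta>, k)"
proof -
  obtain c where c: "coroot \<theta> - coroot (- \<beta>) = (\<Sum>i=1..r. c i *\<^sub>R coroot (\<alpha> i))" "\<forall>i. c i \<ge> 0"
    using highest_coroot_diff[OF uminus_root[OF assms(1)]] by blast
  obtain e where e: "coroot \<theta> = (\<Sum>i=1..r. e i *\<^sub>R coroot (\<alpha> i))" "\<forall>i. e i \<ge> 0"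
    by (rule highest_coroot_expansion)
  define n where "n = (\<lambda>i. if i = 0 then - k else c i + (- k - 1) * e i)"
  have nonneg: "\<forall>i\<in>{0..r}. n i \<ge> 0" using c(2) e(2) assms(2) by (auto simp: n_def)
  have "(\<Sum>i=1..r. n i *\<^sub>R coroot (\<alpha> i))
      = (\<Sum>i=1..r. c i *\<^sub>R coroot (\<alpha> i) + (- k - 1) *\<^sub>R (e i *\<^sub>R coroot (\<alpha> i)))"
    by (rule sum.cong) (auto simp: n_def algebra_simps)
  also have "\<dots> = (coroot \<theta> + coroot \<beta>) + (- k - 1) *\<^sub>R coroot \<theta>"
    using c(1) e(1) by (simp only: sum.distrib scaleR_sum_right coroot_uminus) simp
  finally have "(\<Sum>i=0..r. n i *\<^sub>R aff_simple_root i) = (coroot \<beta>, k)"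
    by (simp add: sum_aff_simple_roots n_def algebra_simps)
  then show ?thesis unfolding aff_pos_def by (intro exI[of _ n] conjI nonneg) simp
qed

lemma aff_pos_level_0:
  assumes "\<beta> \<in> \<Phi>" "\<beta> = (\<Sum>i=1..r. c i *\<^sub>R \<alpha> i)" "\<forall>i\<in>{1..r}. c i \<ge> 0"
  shows "aff_pos (coroot \<beta>, 0)"
proof -
  obtain d where d: "coroot \<beta> = (\<Sum>i=1..r. d i *\<^sub>R coroot (\<alpha> i))" "\<forall>i\<in>{1..r}. d i \<ge> 0"
    using coroot_nonneg_expansion[OF assms(2,3) root_nonzero[OF assms(1)]] by blast
  define n where "n = (\<lambda>i. if i = 0 then 0 else d i)"
  have nonneg: "\<forall>i\<in>{0..r}. n i \<ge> 0" using d(2) by (auto simp: n_def)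
  have "(\<Sum>i=1..r. n i *\<^sub>R coroot (\<alpha> i)) = (\<Sum>i=1..r. d i *\<^sub>R coroot (\<alpha> i))"
    by (rule sum.cong) (auto simp: n_def)
  then have "(\<Sum>i=0..r. n i *\<^sub>R aff_simple_root i) = (coroot \<beta>, 0)"
    using d(1) by (simp add: sum_aff_simple_roots n_def)
  then show ?thesis unfolding aff_pos_def by (intro exI[of _ n] conjI nonneg) simp
qed

lemma aff_roots_pos_or_neg: assumes "x \<in> aff_roots" shows "aff_pos x \<or> aff_pos (- x)"
proof -
  obtain \<beta> k where x: "x = (coroot \<beta>, of_int k)" and b: "\<beta> \<in> \<Phi>"
    using assms by (auto simp: aff_roots_def)
  have mx: "- x = (coroot (- \<beta>), of_int (- k))" using x by (simp add: coroot_uminus)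
  have nb: "- \<beta> \<in> \<Phi>" using uminus_root b by blast
  consider "k < 0" | "k > 0" | "k = 0" by linarith
  then show ?thesis
  proof cases
    case 1 then show ?thesis using aff_pos_level_neg[OF b] x by simp
  next
    case 2 then show ?thesis using aff_pos_level_neg[OF nb] mx by simp
  next
    case 3
    obtain c where c: "\<beta> = (\<Sum>i=1..r. c i *\<^sub>R \<alpha> i)"
      "(\<forall>i\<in>{1..r}. c i \<ge> 0) \<or> (\<forall>i\<in>{1..r}. c i \<le> 0)"
      using root_expansion[OF b] by blast
    from c(2) show ?thesis
    proof
      assume "\<forall>i\<in>{1..r}. c i \<ge> 0"
      then show ?thesis using aff_pos_level_0[OF b c(1)] x 3 by simp
    next
      assume "\<forall>i\<in>{1..r}. c i \<le> 0"
      have "- \<beta> = (\<Sum>i=1..r. (- c i) *\<^sub>R \<alpha> i)" using c(1) by (simp add: sum_negf)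
      moreover have "\<forall>i\<in>{1..r}. - c i \<ge> 0" using \<open>\<forall>i\<in>{1..r}. c i \<le> 0\<close> by simp
      ultimately have "aff_pos (coroot (- \<beta>), 0)" by (rule aff_pos_level_0[OF nb])
      then show ?thesis using mx 3 by simp
    qed
  qed
qed

lemma aff_pos_eq_0: assumes "aff_pos x" "aff_pos (- x)" shows "x = 0"
proof -
  obtain n where n: "\<forall>i\<in>{0..r}. n i \<ge> 0" "x = (\<Sum>i=0..r. n i *\<^sub>R aff_simple_root i)"
    using assms(1) aff_pos_def by blast
  obtain m where m: "\<forall>i\<in>{0..r}. m i \<ge> 0" "- x = (\<Sum>i=0..r. m i *\<^sub>R aff_simple_root i)"
    using assms(2) aff_pos_def by blast
  have "(\<Sum>i=0..r. (n i + m i) *\<^sub>R aff_simple_root i) = x + - x"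
    using n(2) m(2) by (simp add: scaleR_add_left sum.distrib)
  then have "n i + m i = 0" if "i \<in> {0..r}" for i
    using aff_simple_roots_independent[of "\<lambda>i. n i + m i"] that by simp
  then have "\<forall>i\<in>{0..r}. n i = 0" using n(1) m(1) by (simp add: add_nonneg_eq_0_iff)
  then show ?thesis using n(2) by simp
qed

lemma aff_pos_add: assumes "aff_pos x" "aff_pos y" shows "aff_pos (x + y)"
proof -
  obtain n where n: "\<forall>i\<in>{0..r}. n i \<ge> 0" "x = (\<Sum>i=0..r. n i *\<^sub>R aff_simple_root i)"
    using assms(1) aff_pos_def by blast
  obtain m where m: "\<forall>i\<in>{0..r}. m i \<ge> 0" "y = (\<Sum>i=0..r. m i *\<^sub>R aff_simple_root i)"
    using assms(2) aff_pos_def by blast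
  have "x + y = (\<Sum>i=0..r. (n i + m i) *\<^sub>R aff_simple_root i)"
    using n(2) m(2) by (simp add: scaleR_add_left sum.distrib)
  moreover have "\<forall>i\<in>{0..r}. n i + m i \<ge> 0" using n(1) m(1) by auto
  ultimately show ?thesis unfolding aff_pos_def by (intro exI[of _ "\<lambda>i. n i + m i"] conjI)
qed

lemma aff_pos_simple: assumes "j \<le> r" shows "aff_pos (aff_simple_root j)"
proof -
  have "aff_simple_root j = (\<Sum>i=0..r. (if i = j then 1 else 0) *\<^sub>R aff_simple_root i)"
    using assms by (simp add: sum_scaleR_delta)
  then show ?thesis unfolding aff_pos_def by (intro exI[of _ "\<lambda>i. if i = j then 1 else 0"]) auto
qed

lemma aff_roots_not_pos_uminus: "x \<in> aff_roots \<Longrightarrow> aff_pos x \<Longrightarrow> \<not> aff_pos (- x)"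
  using aff_pos_eq_0 aff_roots_nonzero by blast

text \<open>
  In the sum x + (- s_j x) = t a_j of two nonnegative combinations, all coefficients except the
  one of a_j cancel.
\<close>
lemma aff_pos_refl_neg_multiple:
  assumes j: "j \<le> r" and "aff_pos x" "aff_pos (- aff_root_refl j x)"
  obtains c where "c \<ge> 0" "x = c *\<^sub>R aff_simple_root j"
proof -
  obtain m where m: "\<forall>i\<in>{0..r}. m i \<ge> 0" "- aff_root_refl j x = (\<Sum>i=0..r. m i *\<^sub>R aff_simple_root i)"
    using assms(3) aff_pos_def by blast
  obtain n where n: "\<forall>i\<in>{0..r}. n i \<ge> 0" "x = (\<Sum>i=0..r. n i *\<^sub>R aff_simple_root i)"
    using assms(2) aff_pos_def by blast
  let ?t = "fst x \<bullet> simple_root j"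
  have "(\<Sum>i=0..r. (n i + m i - (if i = j then ?t else 0)) *\<^sub>R aff_simple_root i)
      = x + (- aff_root_refl j x) - ?t *\<^sub>R aff_simple_root j"
    using n(2) m(2) j
    by (simp add: scaleR_add_left scaleR_diff_left sum.distrib sum_subtractf sum_scaleR_delta)
  also have "\<dots> = 0" by (simp add: aff_root_refl_def)
  finally have z: "\<forall>i\<in>{0..r}. n i + m i - (if i = j then ?t else 0) = 0"
    using aff_simple_roots_independent[of "\<lambda>i. n i + m i - (if i = j then ?t else 0)"] by blast
  have "n i = 0" if "i \<in> {0..r}" "i \<noteq> j" for i
  proof -
    have "n i + m i = 0" "n i \<ge> 0" "m i \<ge> 0" using z n(1) m(1) that by force+
    then show ?thesis by linarith
  qed
  then have "x = (\<Sum>i=0..r. (if i = j then n j else 0) *\<^sub>R aff_simple_root i)"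
    unfolding n(2) by (intro sum.cong) auto
  then show ?thesis using that[of "n j"] n(1) j by (simp add: sum_scaleR_delta)
qed

lemma aff_roots_nonneg_multiple_simple:
  assumes "j \<le> r" "x \<in> aff_roots" "c \<ge> 0" "x = c *\<^sub>R aff_simple_root j"
  shows "x = aff_simple_root j"
proof -
  obtain \<beta> k where xb: "x = (coroot \<beta>, of_int k)" and b: "\<beta> \<in> \<Phi>"
    using assms(2) by (auto simp: aff_roots_def)
  have c0: "c \<noteq> 0" using assms(4) aff_roots_nonzero[OF assms(2)] by auto
  have "coroot \<beta> = c *\<^sub>R coroot (simple_root j)"
    using assms(4) xb by (simp add: aff_simple_root_def prod_eq_iff)
  then have "coroot (coroot \<beta>) = (1 / c) *\<^sub>R coroot (coroot (simple_root j))"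
    using coroot_scaleR[OF c0] by simp
  then have "\<beta> = (1 / c) *\<^sub>R simple_root j"
    by (simp add: coroot_coroot root_nonzero[OF b] simple_root_nonzero[OF assms(1)])
  then have "c *\<^sub>R \<beta> \<in> \<Phi>" using c0 simple_root_mem[OF assms(1)] by simp
  then have "c = 1" using root_multiple[OF b] assms(3) by force
  then show ?thesis using assms(4) by simp
qed

lemma aff_pos_aff_root_refl:
  assumes "j \<le> r" "x \<in> aff_roots" "aff_pos x" "x \<noteq> aff_simple_root j"
  shows "aff_pos (aff_root_refl j x)"
proof (rule ccontr)
  assume "\<not> aff_pos (aff_root_refl j x)"
  then have "aff_pos (- aff_root_refl j x)"
    using aff_roots_pos_or_neg aff_root_refl_mem assms(1,2) by blast
  then obtain c where "c \<ge> 0" "x = c *\<^sub>R aff_simple_root j"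
    using aff_pos_refl_neg_multiple assms(1,3) by blast
  then show False using aff_roots_nonneg_multiple_simple assms by blast
qed

lemma word_elem_gen_conj:
  assumes w: "is_word w" and ij: "i \<le> r" "j \<le> r"
    and e: "word_act w (aff_simple_root j) = aff_simple_root i"
  shows "elem w (gen \<alpha> \<theta> j l) = gen \<alpha> \<theta> i (elem w l)"
proof -
  let ?e = "aff_eval (aff_simple_root j) l"
  have "elem w (gen \<alpha> \<theta> j l) = word_lin w (gen \<alpha> \<theta> j l) + elem w 0"
    by (rule word_elem_affine)
  also have "\<dots> = elem w l - ?e *\<^sub>R word_lin w (simple_root j)"
    using word_elem_affine[of w l]
    by (simp add: gen_eq_aff_eval linear_diff[OF linear_word_lin] linear_scale[OF linear_word_lin])
  finally have 1: "elem w (gen \<alpha> \<theta> j l) = elem w l - ?e *\<^sub>R word_lin w (simple_root j)" .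
  have 2: "aff_eval (aff_simple_root i) (elem w l) = ?e"
    using aff_eval_word_act[OF w, of "aff_simple_root j" l] e by simp
  have "coroot (word_lin w (simple_root j)) = coroot (simple_root i)"
    using fst_word_act[of w "aff_simple_root j"] e coroot_word_lin[OF w] by (simp add: aff_simple_root_def)
  then have "coroot (coroot (word_lin w (simple_root j))) = coroot (coroot (simple_root i))" by simp
  then have 3: "word_lin w (simple_root j) = simple_root i"
    by (simp add: coroot_coroot simple_root_nonzero[OF ij(1)]
        root_nonzero[OF word_lin_root[OF w simple_root_mem[OF ij(2)]]])
  show ?thesis by (simp only: 1 gen_eq_aff_eval[of i] 2 3)
qed

section \<open>Reduced words\<close>

definition reduced_word :: "nat list \<Rightarrow> bool" where
  "reduced_word w \<longleftrightarrow> is_word w \<and> (\<forall>w'. is_word w' \<longrightarrow> elem w' = elem w \<longrightarrow> length w \<le> length w')"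

lemma is_word_delete_at: "is_word w \<Longrightarrow> is_word (delete_at p w)"
  using set_delete_at_subset by (rule order_trans)

lemma word_elem_eq_comp_gen_iff:
  assumes "j \<le> r" shows "elem u = elem w \<circ> gen \<alpha> \<theta> j \<longleftrightarrow> elem (u @ [j]) = elem w"
proof
  assume "elem u = elem w \<circ> gen \<alpha> \<theta> j"
  then show "elem (u @ [j]) = elem w" by (simp add: word_elem_snoc fun_eq_iff gen_gen[OF assms])
next
  assume "elem (u @ [j]) = elem w"
  then have "elem w \<circ> gen \<alpha> \<theta> j = elem u \<circ> gen \<alpha> \<theta> j \<circ> gen \<alpha> \<theta> j" by (simp add: word_elem_snoc)
  then show "elem u = elem w \<circ> gen \<alpha> \<theta> j" by (simp add: fun_eq_iff gen_gen[OF assms])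
qed

text \<open>
  Induction on w = i w': if w' keeps a_j positive, then s_i makes w'(a_j) negative, so w'(a_j) = a_i
  and s_i w' = w' s_j.
\<close>
lemma exchange_condition:
  assumes "is_word w" "j \<le> r" "\<not> aff_pos (word_act w (aff_simple_root j))"
  obtains p where "p < length w" "elem (delete_at p w) = elem w \<circ> gen \<alpha> \<theta> j"
  using assms
proof (induction w arbitrary: thesis)
  case Nil then show ?case using aff_pos_simple by (simp add: word_act_Nil)
next
  case (Cons i w)
  have i: "i \<le> r" and w: "is_word w" using Cons.prems(2) by auto
  show ?case
  proof (cases "aff_pos (word_act w (aff_simple_root j))")
    case False
    then obtain p where "p < length w" "elem (delete_at p w) = elem w \<circ> gen \<alpha> \<theta> j"
      using Cons.IH w Cons.prems(3) by blast
    then show ?thesis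
      using Cons.prems(1)[of "Suc p"] by (simp add: delete_at_Cons_Suc word_elem_Cons comp_assoc)
  next
    case True
    have "\<not> aff_pos (aff_root_refl i (word_act w (aff_simple_root j)))"
      using Cons.prems(4) by (simp add: word_act_Cons)
    then have "word_act w (aff_simple_root j) = aff_simple_root i"
      using aff_pos_aff_root_refl[OF i word_act_mem[OF w aff_simple_root_mem[OF Cons.prems(3)]] True]
      by blast
    then have "elem w = elem (i # w) \<circ> gen \<alpha> \<theta> j"
      using word_elem_gen_conj[OF w i Cons.prems(3)] gen_gen[OF i] by (auto simp: word_elem_Cons)
    then show ?thesis using Cons.prems(1)[of 0] by (simp add: delete_at_0)
  qed
qed

lemma reduced_wordD: "reduced_word w \<Longrightarrow> is_word w' \<Longrightarrow> elem w' = elem w \<Longrightarrow> length w \<le> length w'"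
  by (simp add: reduced_word_def)

lemma reduced_word_is_word: "reduced_word w \<Longrightarrow> is_word w"
  by (simp add: reduced_word_def)

lemma reduced_word_Nil: "reduced_word []"
  by (simp add: reduced_word_def)

lemma reduced_word_same_length:
  "reduced_word a \<Longrightarrow> reduced_word b \<Longrightarrow> elem a = elem b \<Longrightarrow> length a = length b"
  using reduced_wordD[of a b] reduced_wordD[of b a] reduced_word_is_word[of a] reduced_word_is_word[of b]
  by fastforce

lemma reduced_word_if_same_length:
  assumes "reduced_word a" "is_word w" "elem w = elem a" "length w = length a"
  shows "reduced_word w"
  using assms by (auto simp: reduced_word_def)

lemma reduced_word_appendD1: assumes "reduced_word (x @ y)" shows "reduced_word x"
  unfolding reduced_word_def
proof (intro conjI allI impI)
  show "is_word x" using reduced_word_is_word[OF assms] by auto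
  fix x' assume "is_word x'" "elem x' = elem x"
  then have "is_word (x' @ y)" "elem (x' @ y) = elem (x @ y)"
    using reduced_word_is_word[OF assms] by (simp_all add: word_elem_append)
  then have "length (x @ y) \<le> length (x' @ y)" by (rule reduced_wordD[OF assms])
  then show "length x \<le> length x'" by simp
qed

lemma reduced_word_appendD2: assumes "reduced_word (x @ y)" shows "reduced_word y"
  unfolding reduced_word_def
proof (intro conjI allI impI)
  show "is_word y" using reduced_word_is_word[OF assms] by auto
  fix y' assume "is_word y'" "elem y' = elem y"
  then have "is_word (x @ y')" "elem (x @ y') = elem (x @ y)"
    using reduced_word_is_word[OF assms] by (simp_all add: word_elem_append)
  then have "length (x @ y) \<le> length (x @ y')" by (rule reduced_wordD[OF assms])
  then show "length y \<le> length y'" by simp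
qed

lemma reduced_word_snocI:
  assumes red: "reduced_word w" and j: "j \<le> r" and pos: "aff_pos (word_act w (aff_simple_root j))"
  shows "reduced_word (w @ [j])"
  unfolding reduced_word_def
proof (intro conjI allI impI)
  show wj: "is_word (w @ [j])" using reduced_word_is_word[OF red] j by auto
  fix w' assume w': "is_word w'" "elem w' = elem (w @ [j])"
  have "word_act w' (aff_simple_root j) = word_act (w @ [j]) (aff_simple_root j)"
    by (rule word_act_eq_if_word_elem_eq[OF w'(1) wj w'(2)])
  also have "\<dots> = - word_act w (aff_simple_root j)"
    using aff_root_refl_self[OF j] by (simp add: word_act_snoc word_act_uminus)
  finally have "\<not> aff_pos (word_act w' (aff_simple_root j))"
    using aff_roots_not_pos_uminus[OF word_act_mem[OF reduced_word_is_word[OF red] aff_simple_root_mem[OF j]] pos]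
    by simp
  then obtain q where q: "q < length w'" "elem (delete_at q w') = elem w' \<circ> gen \<alpha> \<theta> j"
    using exchange_condition[OF w'(1) j] by blast
  have "elem w = elem w' \<circ> gen \<alpha> \<theta> j"
    using word_elem_eq_comp_gen_iff[OF j, of w w'] w'(2) by argo
  with q(2) have "elem (delete_at q w') = elem w" by simp
  then have "length w \<le> length (delete_at q w')"
    by (rule reduced_wordD[OF red is_word_delete_at[OF w'(1)]])
  then show "length (w @ [j]) \<le> length w'" using q(1) by (simp add: length_delete_at)
qed

lemma reduced_word_snocD:
  assumes red: "reduced_word (w @ [j])" shows "aff_pos (word_act w (aff_simple_root j))"
proof (rule ccontr)
  assume "\<not> aff_pos (word_act w (aff_simple_root j))"
  moreover have w: "is_word w" and j: "j \<le> r" using reduced_word_is_word[OF red] by auto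
  ultimately obtain q where q: "q < length w" "elem (delete_at q w) = elem w \<circ> gen \<alpha> \<theta> j"
    using exchange_condition by blast
  have "elem (delete_at q w) = elem (w @ [j])" using q(2) by (simp add: word_elem_snoc)
  then have "length (w @ [j]) \<le> length (delete_at q w)"
    by (rule reduced_wordD[OF red is_word_delete_at[OF w]])
  then show False using q(1) by (simp add: length_delete_at)
qed

lemma reduced_word_snoc_neg:
  assumes red: "reduced_word (w @ [j])" shows "aff_pos (- word_act (w @ [j]) (aff_simple_root j))"
  using reduced_word_snocD[OF red] aff_root_refl_self reduced_word_is_word[OF red]
  by (simp add: word_act_snoc word_act_uminus)

lemma reduced_word_snoc_not_pos:
  assumes red: "reduced_word (w @ [j])" shows "\<not> aff_pos (word_act (w @ [j]) (aff_simple_root j))"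
proof -
  have "is_word (w @ [j])" "j \<le> r" using reduced_word_is_word[OF red] by auto
  then have "word_act (w @ [j]) (aff_simple_root j) \<in> aff_roots"
    using word_act_mem aff_simple_root_mem by blast
  then show ?thesis using reduced_word_snoc_neg[OF red] aff_pos_eq_0 aff_roots_nonzero by blast
qed

lemma word_elem_snoc_cancel:
  assumes "j \<le> r" "elem (a @ [j]) = elem (b @ [j])" shows "elem a = elem b"
proof
  fix l
  show "elem a l = elem b l"
    using fun_cong[OF assms(2), of "gen \<alpha> \<theta> j l"] by (simp add: word_elem_snoc gen_gen[OF assms(1)])
qed

lemma word_elem_Cons_cancel:
  assumes "j \<le> r" "elem (j # a) = elem (j # b)" shows "elem a = elem b"
proof
  fix l
  show "elem a l = elem b l"
    using arg_cong[OF fun_cong[OF assms(2), of l], of "gen \<alpha> \<theta> j"]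
    by (simp add: word_elem_Cons gen_gen[OF assms(1)])
qed

lemma is_word_alt_word: "s \<le> r \<Longrightarrow> t \<le> r \<Longrightarrow> is_word (alt_word s t n)"
  using set_alt_word[of s t n] by auto

lemma word_roots_eq:
  "word_roots \<alpha> \<theta> w = map (\<lambda>j. word_lin (take j w) (simple_root (w ! j))) [0..<length w]"
  by (simp add: word_roots_def word_lin_def)

lemma length_word_roots: "length (word_roots \<alpha> \<theta> w) = length w"
  by (simp add: word_roots_eq)

lemma word_roots_snoc: "word_roots \<alpha> \<theta> (w @ [i]) = word_roots \<alpha> \<theta> w @ [word_lin w (simple_root i)]"
proof -
  have "map (\<lambda>j. word_lin (take j (w @ [i])) (simple_root ((w @ [i]) ! j))) [0..<length w]
      = map (\<lambda>j. word_lin (take j w) (simple_root (w ! j))) [0..<length w]"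
    by (rule map_cong) (auto simp: nth_append)
  then show ?thesis by (simp add: word_roots_eq)
qed

lemma word_roots_append:
  "word_roots \<alpha> \<theta> (u @ w) = word_roots \<alpha> \<theta> u @ map (word_lin u) (word_roots \<alpha> \<theta> w)"
proof (induction w rule: rev_induct)
  case Nil then show ?case by (simp add: word_roots_eq)
next
  case (snoc i w)
  then show ?case
    using word_roots_snoc[of "u @ w" i] by (simp add: word_roots_snoc word_lin_append)
qed

lemma alt_prod_eq_word_lin: "alt_prod (simple_root s) (simple_root t) n = word_lin (alt_word s t n)"
  by (induction n arbitrary: s t) (auto simp: word_lin_Nil word_lin_Cons)

lemma word_roots_alt_word:
  "word_roots \<alpha> \<theta> (alt_word s t n)
    = map (\<lambda>j. word_lin (alt_word s t j) (simple_root (if even j then s else t))) [0..<n]"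
  unfolding word_roots_eq by (rule map_cong) (auto simp: take_alt_word nth_alt_word)

lemma rank2_roots_eq_word_roots:
  "rank2_roots (simple_root s) (simple_root t)
    = word_roots \<alpha> \<theta> (alt_word s t (dihedral_m (simple_root s) (simple_root t)))"
  unfolding rank2_roots_def word_roots_alt_word alt_prod_eq_word_lin by (rule map_cong) auto

lemma dihedral_m_simple_roots:
  "dihedral_m (simple_root s) (simple_root t) = (LEAST n. 0 < n \<and> word_lin (alt_word s t (2 * n)) = id)"
proof -
  have "(refl (simple_root s) \<circ> refl (simple_root t)) ^^ n = word_lin (alt_word s t (2 * n))" for n
    by (induction n) (simp_all add: word_lin_Nil word_lin_Cons numeral_2_eq_2 comp_assoc)
  then show ?thesis by (simp add: dihedral_m_def)
qed

lemma word_lin_rev_comp: "is_word w \<Longrightarrow> word_lin (rev w) \<circ> word_lin w = id"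
  using word_lin_rev_word_lin by (auto simp: fun_eq_iff)

lemma refl_word_lin_simple_root:
  assumes "is_word w" shows "refl (word_lin w (simple_root i)) = word_lin (w @ [i] @ rev w)"
proof
  fix x
  have "refl (word_lin w (simple_root i)) x
      = refl (word_lin w (simple_root i)) (word_lin w (word_lin (rev w) x))"
    using word_lin_word_lin_rev[OF assms] by simp
  also have "\<dots> = word_lin (w @ [i] @ rev w) x"
    by (simp add: refl_word_lin[OF assms] word_lin_append word_lin_Cons word_lin_Nil)
  finally show "refl (word_lin w (simple_root i)) x = word_lin (w @ [i] @ rev w) x" .
qed

lemma refl_eq_refl_imp:
  assumes "\<beta> \<in> \<Phi>" "\<gamma> \<in> \<Phi>" "refl \<beta> = refl \<gamma>" shows "\<beta> = \<gamma> \<or> \<beta> = - \<gamma>"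
proof -
  have "refl \<gamma> \<beta> = - \<beta>" using assms(3) refl_self[OF root_nonzero[OF assms(1)]] by metis
  then have e: "2 *\<^sub>R \<beta> = (\<beta> \<bullet> coroot \<gamma>) *\<^sub>R \<gamma>" by (simp add: refl_def scaleR_2 algebra_simps)
  define c where "c = (\<beta> \<bullet> coroot \<gamma>) / 2"
  have "\<beta> = (1 / 2) *\<^sub>R (2 *\<^sub>R \<beta>)" by simp
  also have "\<dots> = c *\<^sub>R \<gamma>" unfolding e c_def by simp
  finally have b: "\<beta> = c *\<^sub>R \<gamma>" .
  then have "c = 1 \<or> c = -1" using root_multiple[OF assms(2)] assms(1) by simp
  then show ?thesis using b by auto
qed

lemma word_lin_alt_word_double:
  assumes "s \<le> r" "t \<le> r" "word_lin (alt_word s t k) = word_lin (alt_word t s k)"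
  shows "word_lin (alt_word s t (2 * k)) = id"
proof -
  have "alt_word s t (2 * k) = alt_word s t k @ (if even k then alt_word s t k else alt_word t s k)"
    using alt_word_add[of s t k k] by (simp add: mult_2)
  moreover have "rev (alt_word t s k) = (if even k then alt_word s t k else alt_word t s k)"
    by (simp add: rev_alt_word)
  ultimately show ?thesis
    using assms word_lin_rev_comp[OF is_word_alt_word[OF assms(2,1)], of k]
    by (cases "even k") (simp_all add: word_lin_append)
qed

lemma reduced_alt_word_take:
  assumes "reduced_word (alt_word s t k)" "j \<le> k" shows "reduced_word (alt_word s t j)"
proof -
  have "alt_word s t k = alt_word s t j @ drop j (alt_word s t k)"
    using take_alt_word[OF assms(2)] append_take_drop_id[of j "alt_word s t k"] by simp
  then have "reduced_word (alt_word s t j @ drop j (alt_word s t k))" using assms(1) by argo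
  then show ?thesis by (rule reduced_word_appendD1)
qed

lemma aff_pos_alt_word_root:
  assumes "reduced_word (alt_word s t k)" "j < k"
  shows "aff_pos (word_act (alt_word s t j) (aff_simple_root (if even j then s else t)))"
  using reduced_alt_word_take[OF assms(1), of "Suc j"] assms(2)
  by (intro reduced_word_snocD) (simp add: alt_word_snoc del: alt_word.simps)

lemma fst_word_act_aff_simple_root:
  "is_word w \<Longrightarrow> fst (word_act w (aff_simple_root i)) = coroot (word_lin w (simple_root i))"
  by (simp add: fst_word_act aff_simple_root_def coroot_word_lin)

section \<open>Rank 2\<close>

lemma simple_root_inj: assumes "s \<le> r" "t \<le> r" "s \<noteq> t" shows "simple_root s \<noteq> simple_root t"
proof
  assume e: "simple_root s = simple_root t"
  have inj: "inj_on \<alpha> {1..r}" using simple_roots by (simp add: simple_roots_def)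
  consider "s = 0" "t \<in> {1..r}" | "t = 0" "s \<in> {1..r}" | "s \<in> {1..r}" "t \<in> {1..r}"
    using assms by (cases "s = 0"; cases "t = 0") auto
  then show False
  proof cases
    case 1
    then have "- \<theta> = \<alpha> t" using e by (simp add: simple_root_0 simple_root_alpha)
    then have "\<theta> = - \<alpha> t" by (metis minus_minus)
    then show False using highest_root_neq_uminus_alpha 1(2) by blast
  next
    case 2
    then have "\<alpha> s = - \<theta>" using e by (simp add: simple_root_0 simple_root_alpha)
    then have "\<theta> = - \<alpha> s" by (metis minus_minus)
    then show False using highest_root_neq_uminus_alpha 2(2) by blast
  next
    case 3
    then have "\<alpha> s = \<alpha> t" using e simple_root_alpha[OF 3(1)] simple_root_alpha[OF 3(2)] by argo
    with 3 show False using inj assms(3) unfolding inj_on_def by blast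
  qed
qed

lemma inner_simple_roots_nonpos:
  assumes "s \<le> r" "t \<le> r" "s \<noteq> t" shows "simple_root s \<bullet> simple_root t \<le> 0"
proof -
  consider "s = 0" "t \<in> {1..r}" | "t = 0" "s \<in> {1..r}" | "s \<in> {1..r}" "t \<in> {1..r}"
    using assms by (cases "s = 0"; cases "t = 0") auto
  then show ?thesis
  proof cases
    case 1
    have "\<theta> \<bullet> \<alpha> t \<ge> 0" using inner_highest_alpha_nonneg 1(2) by blast
    then show ?thesis using 1 by (simp add: simple_root_0 simple_root_alpha)
  next
    case 2
    have "\<alpha> s \<bullet> \<theta> \<ge> 0" using inner_highest_alpha_nonneg[OF 2(2)] by (simp only: inner_commute)
    then show ?thesis using 2 by (simp add: simple_root_0 simple_root_alpha)
  next
    case 3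
    have "\<alpha> s \<bullet> \<alpha> t \<le> 0" using inner_alpha_nonpos[OF 3(2,1)] assms(3) by blast
    then show ?thesis using 3 by (simp add: simple_root_alpha)
  qed
qed

lemma simple_roots_pair_independent:
  assumes "s \<le> r" "t \<le> r" "s \<noteq> t" "simple_root t \<noteq> - simple_root s"
    and "p *\<^sub>R simple_root s + q *\<^sub>R simple_root t = 0"
  shows "p = 0 \<and> q = 0"
proof (cases "q = 0")
  case True
  then show ?thesis using assms(5) simple_root_nonzero[OF assms(1)] by simp
next
  case False
  have "q *\<^sub>R simple_root t = - (p *\<^sub>R simple_root s)"
    using assms(5) by (simp add: eq_neg_iff_add_eq_0 add.commute)
  then have "(1 / q) *\<^sub>R (q *\<^sub>R simple_root t) = (1 / q) *\<^sub>R (- (p *\<^sub>R simple_root s))" by simp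
  then have t: "simple_root t = (- p / q) *\<^sub>R simple_root s" using False by simp
  moreover have "(- p / q) *\<^sub>R simple_root s \<in> \<Phi>" using t simple_root_mem[OF assms(2)] by simp
  ultimately have "- p / q = 1 \<or> - p / q = -1" using root_multiple[OF simple_root_mem[OF assms(1)]] by blast
  then have "simple_root t = simple_root s \<or> simple_root t = - simple_root s" using t by auto
  then show ?thesis using simple_root_inj[OF assms(1-3)] assms(4) by auto
qed

lemma span_aff_simple_pair_fst_inj:
  assumes st: "s \<le> r" "t \<le> r" "s \<noteq> t" "simple_root t \<noteq> - simple_root s"
    and x: "x \<in> span {aff_simple_root s, aff_simple_root t}"
    and y: "y \<in> span {aff_simple_root s, aff_simple_root t}" and f: "fst x = fst y"
  shows "x = y"
proof -
  have "x - y \<in> span {aff_simple_root s, aff_simple_root t}" using span_diff[OF x y] .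
  then obtain p q where pq: "x - y = p *\<^sub>R aff_simple_root s + q *\<^sub>R aff_simple_root t"
    by (auto simp: span_breakdown_eq span_singleton algebra_simps)
  have "(p * (2 / (simple_root s \<bullet> simple_root s))) *\<^sub>R simple_root s
      + (q * (2 / (simple_root t \<bullet> simple_root t))) *\<^sub>R simple_root t = 0"
    using arg_cong[OF pq, of fst] f by (simp add: aff_simple_root_def coroot_def)
  then have "p * (2 / (simple_root s \<bullet> simple_root s)) = 0 \<and> q * (2 / (simple_root t \<bullet> simple_root t)) = 0"
    by (rule simple_roots_pair_independent[OF st])
  then have "p = 0" "q = 0" using simple_root_nonzero st by auto
  then show ?thesis using pq by simp
qed

lemma aff_simple_root_span: "c \<in> {s, t} \<Longrightarrow> aff_simple_root c \<in> span {aff_simple_root s, aff_simple_root t}"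
  by (auto intro: span_base)

lemma word_act_span:
  assumes "set w \<subseteq> {s, t}" "x \<in> span {aff_simple_root s, aff_simple_root t}"
  shows "word_act w x \<in> span {aff_simple_root s, aff_simple_root t}"
  using assms(1)
proof (induction w)
  case Nil then show ?case using assms(2) by (simp add: word_act_Nil)
next
  case (Cons i w)
  then have "word_act w x \<in> span {aff_simple_root s, aff_simple_root t}"
    and "aff_simple_root i \<in> span {aff_simple_root s, aff_simple_root t}"
    using aff_simple_root_span by auto
  then show ?case by (simp add: word_act_Cons aff_root_refl_def span_diff span_scale)
qed

lemma aff_pos_rank2_not_opposite:
  assumes st: "s \<le> r" "t \<le> r" "s \<noteq> t" "simple_root t \<noteq> - simple_root s"
    and uv: "set u \<subseteq> {s, t}" "set v \<subseteq> {s, t}" and cd: "c \<in> {s, t}" "d \<in> {s, t}"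
    and pos: "aff_pos (word_act u (aff_simple_root c))" "aff_pos (word_act v (aff_simple_root d))"
  shows "word_lin u (simple_root c) \<noteq> - word_lin v (simple_root d)"
proof
  let ?g = "word_act u (aff_simple_root c)" and ?h = "word_act v (aff_simple_root d)"
  assume "word_lin u (simple_root c) = - word_lin v (simple_root d)"
  moreover have "is_word u" "is_word v" using uv st by auto
  ultimately have "fst ?g = fst (- ?h)" by (simp add: fst_word_act_aff_simple_root coroot_uminus)
  moreover have "?g \<in> span {aff_simple_root s, aff_simple_root t}" "- ?h \<in> span {aff_simple_root s, aff_simple_root t}"
    using word_act_span[OF uv(1) aff_simple_root_span[OF cd(1)]]
      span_neg[OF word_act_span[OF uv(2) aff_simple_root_span[OF cd(2)]]] by auto
  ultimately have "?g = - ?h" using span_aff_simple_pair_fst_inj[OF st] by blast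
  moreover have "d \<le> r" using cd st by auto
  then have "?h \<in> aff_roots" using word_act_mem[OF \<open>is_word v\<close> aff_simple_root_mem] by blast
  ultimately show False using pos aff_roots_not_pos_uminus by simp
qed

lemma word_act_fst_0: "fst x = 0 \<Longrightarrow> word_act w x = x"
  by (induction w) (simp_all add: word_act_Nil word_act_Cons aff_root_refl_def)

lemma aff_simple_root_add_nonzero:
  assumes "s \<le> r" "t \<le> r" "s \<noteq> t" shows "aff_simple_root s + aff_simple_root t \<noteq> 0"
proof
  let ?n = "\<lambda>i. (if i = s then 1 else 0) + (if i = t then 1 else (0::real))"
  assume "aff_simple_root s + aff_simple_root t = 0"
  moreover have "(\<Sum>i=0..r. ?n i *\<^sub>R aff_simple_root i) = aff_simple_root s + aff_simple_root t"
    using assms by (simp add: scaleR_add_left sum.distrib sum_scaleR_delta)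
  ultimately have "?n s = 0" using aff_simple_roots_independent[of ?n s] assms by simp
  then show False using assms by simp
qed

text \<open>
  If \<alpha>_t = -\<alpha>_s, then a_s + a_t has gradient 0 and is fixed by every element, but s and t are
  both right descents of the common element of the two words, which thus makes a_s + a_t negative.
\<close>
lemma braid_simple_roots_not_opposite:
  assumes st: "s \<le> r" "t \<le> r" "s \<noteq> t"
    and red: "reduced_word (alt_word s t (Suc k))" "reduced_word (alt_word t s (Suc k))"
    and e: "elem (alt_word s t (Suc k)) = elem (alt_word t s (Suc k))"
  shows "simple_root t \<noteq> - simple_root s"
proof
  let ?w = "alt_word s t (Suc k)"
  assume opp: "simple_root t = - simple_root s"
  let ?x = "if even k then s else t" and ?y = "if even k then t else s"
  have "word_act (alt_word t s (Suc k)) = word_act ?w"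
    using word_act_eq_if_word_elem_eq[OF is_word_alt_word is_word_alt_word e[symmetric]] st by blast
  moreover have "aff_pos (- word_act (alt_word t s (Suc k)) (aff_simple_root ?y))"
    using reduced_word_snoc_neg[of "alt_word t s k" ?y] red(2) unfolding alt_word_snoc[of t s k] .
  ultimately have "aff_pos (- word_act ?w (aff_simple_root ?y))" by simp
  moreover have "aff_pos (- word_act ?w (aff_simple_root ?x))"
    using reduced_word_snoc_neg[of "alt_word s t k" ?x] red(1) unfolding alt_word_snoc[of s t k] .
  ultimately have "aff_pos (- word_act ?w (aff_simple_root s)) \<and> aff_pos (- word_act ?w (aff_simple_root t))"
    by (cases "even k") auto
  then have neg: "aff_pos (- word_act ?w (aff_simple_root s + aff_simple_root t))"
    using aff_pos_add[of "- word_act ?w (aff_simple_root s)" "- word_act ?w (aff_simple_root t)"]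
    by (simp add: word_act_add)
  have "fst (aff_simple_root s + aff_simple_root t) = 0"
    using opp by (simp add: aff_simple_root_def coroot_uminus)
  then have "word_act ?w (aff_simple_root s + aff_simple_root t) = aff_simple_root s + aff_simple_root t"
    by (rule word_act_fst_0)
  with neg have "aff_pos (- (aff_simple_root s + aff_simple_root t))" by simp
  moreover have "aff_pos (aff_simple_root s + aff_simple_root t)" using aff_pos_add aff_pos_simple st by blast
  ultimately have "aff_simple_root s + aff_simple_root t = 0" using aff_pos_eq_0 by blast
  then show False using aff_simple_root_add_nonzero[OF st] by simp
qed

text \<open>
  Otherwise the corresponding affine root of the reduced word s t s ... would be a_s, and s_s
  would map the positive affine root of its reduced suffix t s t ... to -a_s.
\<close>
lemma alt_word_root_neq_first:
  assumes st: "s \<le> r" "t \<le> r" "s \<noteq> t" "simple_root t \<noteq> - simple_root s"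
    and red: "reduced_word (alt_word s t k)" and m: "0 < m" "m < k"
  shows "word_lin (alt_word s t m) (simple_root (if even m then s else t)) \<noteq> simple_root s"
proof
  let ?c = "if even m then s else t"
  let ?g = "word_act (alt_word s t m) (aff_simple_root ?c)"
  assume l: "word_lin (alt_word s t m) (simple_root ?c) = simple_root s"
  have c: "?c \<in> {s, t}" and u: "is_word (alt_word s t m)" using st is_word_alt_word by auto
  obtain m' where m': "m = Suc m'" using m(1) by (cases m) auto
  have "?g \<in> span {aff_simple_root s, aff_simple_root t}"
    by (rule word_act_span[OF set_alt_word aff_simple_root_span[OF c]])
  moreover have "aff_simple_root s \<in> span {aff_simple_root s, aff_simple_root t}"
    by (rule aff_simple_root_span) simp
  moreover have "fst ?g = fst (aff_simple_root s)"
    unfolding fst_word_act_aff_simple_root[OF u] l by (simp add: aff_simple_root_def)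
  ultimately have "?g = aff_simple_root s" by (rule span_aff_simple_pair_fst_inj[OF st])
  then have "aff_root_refl s (word_act (alt_word t s m') (aff_simple_root ?c)) = aff_simple_root s"
    using m' by (simp add: word_act_Cons)
  then have neg: "word_act (alt_word t s m') (aff_simple_root ?c) = - aff_simple_root s"
    using aff_root_refl_aff_root_refl[OF st(1)] aff_root_refl_self[OF st(1)] by metis
  have "reduced_word ([s] @ alt_word t s m)"
    using reduced_alt_word_take[OF red, of "Suc m"] m(2) by simp
  then have "reduced_word (alt_word t s m)" by (rule reduced_word_appendD2)
  moreover have "?c = (if even m' then t else s)" using m' by simp
  ultimately have "reduced_word (alt_word t s m' @ [?c])"
    using m' alt_word_snoc[of t s m'] by (simp del: alt_word.simps)
  from reduced_word_snocD[OF this] have "aff_pos (- aff_simple_root s)" by (simp only: neg)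
  then show False
    using aff_roots_not_pos_uminus[OF aff_simple_root_mem[OF st(1)] aff_pos_simple[OF st(1)]] by simp
qed

text \<open>
  If k exceeded the order m, then the (m+1)-st root of the reduced word alt_word s t k would be
  reflected into s_s by the identity (s_s s_t)^m = 1, hence equal \<plusminus>\<alpha>_s, and neither sign is
  possible for a root of a reduced word.
\<close>
lemma reduced_alt_word_length_le:
  assumes st: "s \<le> r" "t \<le> r" "s \<noteq> t" "simple_root t \<noteq> - simple_root s"
    and red: "reduced_word (alt_word s t k)" and m: "0 < m" "word_lin (alt_word s t (2 * m)) = id"
  shows "k \<le> m"
proof (rule ccontr)
  assume "\<not> k \<le> m"
  then have mk: "m < k" by simp
  let ?c = "if even m then s else t"
  let ?u = "alt_word s t m"
  let ?l = "word_lin ?u (simple_root ?c)"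
  have c: "?c \<le> r" "?c \<in> {s, t}" and u: "is_word ?u" using st is_word_alt_word by auto
  have "refl ?l = word_lin (alt_word s t (2 * m) @ [s])"
    using refl_word_lin_simple_root[OF u, of ?c] alt_word_snoc[of s t "2 * m"]
    by (simp only: alt_word_palindrome) simp
  then have "refl ?l = refl (simple_root s)" using m(2) by (simp add: word_lin_append word_lin_Cons word_lin_Nil)
  then have "?l = simple_root s \<or> ?l = - simple_root s"
    using refl_eq_refl_imp word_lin_root[OF u simple_root_mem[OF c(1)]] simple_root_mem[OF st(1)] by blast
  moreover have "?l \<noteq> simple_root s" by (rule alt_word_root_neq_first[OF st red m(1) mk])
  moreover have "?l \<noteq> - word_lin [] (simple_root s)"
    using aff_pos_rank2_not_opposite[OF st set_alt_word[of s t m], of "[]" ?c s] c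
      aff_pos_alt_word_root[OF red mk] aff_pos_simple[OF st(1)] by (simp add: word_act_Nil)
  ultimately show False by (simp add: word_lin_Nil)
qed

lemma word_roots_braid_rev:
  assumes st: "s \<le> r" "t \<le> r" "s \<noteq> t" "simple_root t \<noteq> - simple_root s"
    and red: "reduced_word (alt_word s t m)" "reduced_word (alt_word t s m)"
    and m: "word_lin (alt_word s t (2 * m)) = id"
  shows "word_roots \<alpha> \<theta> (alt_word t s m) = rev (word_roots \<alpha> \<theta> (alt_word s t m))"
proof (rule nth_equalityI)
  show "length (word_roots \<alpha> \<theta> (alt_word t s m)) = length (rev (word_roots \<alpha> \<theta> (alt_word s t m)))"
    by (simp add: length_word_roots)
  fix j assume "j < length (word_roots \<alpha> \<theta> (alt_word t s m))"
  then have j: "j < m" by (simp add: length_word_roots)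
  define i where "i = m - 1 - j"
  have i: "i < m" "2 * i + 1 + (2 * j + 1) = 2 * m" using j by (auto simp: i_def)
  let ?c = "if even i then s else t" and ?d = "if even j then t else s"
  let ?l1 = "word_lin (alt_word s t i) (simple_root ?c)"
  let ?l2 = "word_lin (alt_word t s j) (simple_root ?d)"
  have wi: "is_word (alt_word s t i)" and wj: "is_word (alt_word t s j)" using is_word_alt_word st by auto
  have "alt_word s t (2 * m) = alt_word s t ((2 * i + 1) + (2 * j + 1))" using i(2) by simp
  also have "\<dots> = alt_word s t (2 * i + 1) @ alt_word t s (2 * j + 1)"
    by (simp only: alt_word_add) (simp del: alt_word.simps)
  finally have "word_lin (alt_word s t (2 * i + 1)) \<circ> word_lin (alt_word t s (2 * j + 1)) = id"
    using m by (simp add: word_lin_append del: alt_word.simps)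
  moreover have "word_lin (alt_word t s (2 * j + 1)) \<circ> word_lin (alt_word t s (2 * j + 1)) = id"
    using word_lin_rev_comp[OF is_word_alt_word[OF st(2,1)], of "2 * j + 1"]
    by (simp add: rev_alt_word del: alt_word.simps)
  ultimately have "word_lin (alt_word s t (2 * i + 1)) = word_lin (alt_word t s (2 * j + 1))"
    by (metis comp_id comp_assoc)
  then have "refl ?l1 = refl ?l2"
    using refl_word_lin_simple_root[OF wi, of ?c] refl_word_lin_simple_root[OF wj, of ?d]
    by (simp only: alt_word_palindrome)
  then have "?l1 = ?l2 \<or> ?l1 = - ?l2"
    using refl_eq_refl_imp word_lin_root[OF wi] word_lin_root[OF wj] simple_root_mem st by simp
  moreover have "set (alt_word t s j) \<subseteq> {s, t}" using set_alt_word[of t s j] by auto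
  then have "?l1 \<noteq> - ?l2"
    using aff_pos_rank2_not_opposite[OF st set_alt_word[of s t i] _ _ _
        aff_pos_alt_word_root[OF red(1) i(1)] aff_pos_alt_word_root[OF red(2) j]] by simp
  ultimately show "word_roots \<alpha> \<theta> (alt_word t s m) ! j = rev (word_roots \<alpha> \<theta> (alt_word s t m)) ! j"
    using i j by (auto simp: word_roots_alt_word rev_nth length_word_roots i_def)
qed

lemma alt_prod_word_lin:
  "is_word u \<Longrightarrow> alt_prod (word_lin u a) (word_lin u b) n (word_lin u x) = word_lin u (alt_prod a b n x)"
  by (induction n arbitrary: a b x) (simp_all add: refl_word_lin)

lemma funpow_refl_word_lin:
  assumes u: "is_word u"
  shows "((refl (word_lin u a) \<circ> refl (word_lin u b)) ^^ n) (word_lin u x)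
    = word_lin u (((refl a \<circ> refl b) ^^ n) x)"
  by (induction n) (simp_all add: refl_word_lin[OF u])

lemma dihedral_m_word_lin:
  assumes u: "is_word u" shows "dihedral_m (word_lin u a) (word_lin u b) = dihedral_m a b"
proof -
  have "(refl (word_lin u a) \<circ> refl (word_lin u b)) ^^ n = id \<longleftrightarrow> (refl a \<circ> refl b) ^^ n = id" for n
  proof
    assume h: "(refl (word_lin u a) \<circ> refl (word_lin u b)) ^^ n = id"
    show "(refl a \<circ> refl b) ^^ n = id"
    proof
      fix z
      have "word_lin u (((refl a \<circ> refl b) ^^ n) z) = word_lin u z"
        using h funpow_refl_word_lin[OF u, where a=a and b=b and n=n and x=z] by simp
      then have "word_lin (rev u) (word_lin u (((refl a \<circ> refl b) ^^ n) z)) = word_lin (rev u) (word_lin u z)"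
        by simp
      then show "((refl a \<circ> refl b) ^^ n) z = id z" using word_lin_rev_word_lin[OF u] by simp
    qed
  next
    assume h: "(refl a \<circ> refl b) ^^ n = id"
    show "(refl (word_lin u a) \<circ> refl (word_lin u b)) ^^ n = id"
    proof
      fix y
      show "((refl (word_lin u a) \<circ> refl (word_lin u b)) ^^ n) y = id y"
        using funpow_refl_word_lin[OF u, where a=a and b=b and n=n and x="word_lin (rev u) y"] h
          word_lin_word_lin_rev[OF u] by simp
    qed
  qed
  then show ?thesis unfolding dihedral_m_def by simp
qed

lemma rank2_roots_word_lin:
  "is_word u \<Longrightarrow> rank2_roots (word_lin u a) (word_lin u b) = map (word_lin u) (rank2_roots a b)"
  unfolding rank2_roots_def
  by (simp add: dihedral_m_word_lin alt_prod_word_lin[symmetric] if_distrib[of "word_lin u"])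

lemma alt_word_braid_length:
  assumes st: "s \<le> r" "t \<le> r" "s \<noteq> t" and k: "0 < k"
    and red: "reduced_word (alt_word s t k)" "reduced_word (alt_word t s k)"
    and e: "elem (alt_word s t k) = elem (alt_word t s k)"
  shows "simple_root t \<noteq> - simple_root s" "word_lin (alt_word s t (2 * k)) = id"
    and "dihedral_m (simple_root s) (simple_root t) = k"
proof -
  obtain k' where k': "k = Suc k'" using k by (cases k) auto
  show opp: "simple_root t \<noteq> - simple_root s"
    using braid_simple_roots_not_opposite[OF st red[unfolded k'] e[unfolded k']] .
  show double: "word_lin (alt_word s t (2 * k)) = id"
    by (rule word_lin_alt_word_double[OF st(1,2) word_lin_eq_if_word_elem_eq[OF e]])
  let ?P = "\<lambda>n. 0 < n \<and> word_lin (alt_word s t (2 * n)) = id"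
  have P: "?P (LEAST n. ?P n)" and le: "(LEAST n. ?P n) \<le> k"
    using LeastI[of ?P k] Least_le[of ?P k] k double by auto
  have "k \<le> (LEAST n. ?P n)" using reduced_alt_word_length_le[OF st opp red(1)] P by blast
  with le show "dihedral_m (simple_root s) (simple_root t) = k" by (simp add: dihedral_m_simple_roots)
qed
end

section \<open>Operators of words\<close>

locale R_matrix_datum = affine_root_datum \<Phi> r \<alpha> \<theta> for \<Phi> :: "'a::euclidean_space set" and r \<alpha> \<theta> +
  fixes R :: "'a \<Rightarrow> 'v \<Rightarrow> 'v"
  assumes R_bij: "\<And>a. a \<in> \<Phi> \<Longrightarrow> bij (R a)"
    and R_uminus: "\<And>a. a \<in> \<Phi> \<Longrightarrow> R (- a) = inv (R a)"
    and yang_baxter: "\<And>a b. a \<in> \<Phi> \<Longrightarrow> b \<in> \<Phi> \<Longrightarrow> a \<bullet> b \<le> 0 \<Longrightarrow> b \<noteq> - a \<Longrightarrow>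
      fold (\<lambda>\<gamma> acc. acc \<circ> R \<gamma>) (rank2_roots a b) id = fold (\<lambda>\<gamma> acc. R \<gamma> \<circ> acc) (rank2_roots a b) id"
begin

abbreviation R_word :: "nat list \<Rightarrow> 'v \<Rightarrow> 'v" where "R_word w \<equiv> word_operator R \<alpha> \<theta> w"

lemma R_word_append:
  "R_word (u @ w) = fold (\<lambda>\<beta> acc. R \<beta> \<circ> acc) (map (word_lin u) (word_roots \<alpha> \<theta> w)) id \<circ> R_word u"
proof -
  have "R_word (u @ w) = fold (\<lambda>\<beta> acc. R \<beta> \<circ> acc) (map (word_lin u) (word_roots \<alpha> \<theta> w)) (R_word u)"
    by (simp add: word_operator_def word_roots_append)
  then show ?thesis by (simp only: fold_comp_init[of R _ "R_word u"])
qed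

lemma R_word_snoc: "R_word (w @ [i]) = R (word_lin w (simple_root i)) \<circ> R_word w"
  by (simp add: R_word_append word_roots_eq word_lin_Nil)

lemma R_uminus_comp: "a \<in> \<Phi> \<Longrightarrow> R (- a) \<circ> R a = id"
  using R_uminus R_bij bij_is_inj inv_o_cancel by metis

text \<open>
  Both sides are, after conjugation by the prefix u, the two sides of the Yang-Baxter equation
  for the obtuse pair u(\<alpha>_s), u(\<alpha>_t).
\<close>
lemma R_word_braid:
  assumes st: "s \<le> r" "t \<le> r" "s \<noteq> t"
    and red: "reduced_word (alt_word s t k)" "reduced_word (alt_word t s k)"
    and e: "elem (alt_word s t k) = elem (alt_word t s k)" and u: "is_word u"
  shows "R_word (u @ alt_word s t k) = R_word (u @ alt_word t s k)"
proof (cases "k = 0")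
  case False
  then have k: "0 < k" by simp
  note braid = alt_word_braid_length[OF st k red e]
  let ?a = "word_lin u (simple_root s)" and ?b = "word_lin u (simple_root t)"
  let ?roots = "map (word_lin u) (word_roots \<alpha> \<theta> (alt_word s t k))"
  have roots: "rank2_roots ?a ?b = ?roots"
    using rank2_roots_word_lin[OF u] rank2_roots_eq_word_roots braid(3) by simp
  have rev_roots: "word_roots \<alpha> \<theta> (alt_word t s k) = rev (word_roots \<alpha> \<theta> (alt_word s t k))"
    by (rule word_roots_braid_rev[OF st braid(1) red braid(2)])
  have a: "?a \<in> \<Phi>" and b: "?b \<in> \<Phi>" using word_lin_root[OF u] simple_root_mem st by auto
  have obtuse: "?a \<bullet> ?b \<le> 0" using inner_word_lin[OF u] inner_simple_roots_nonpos[OF st] by simp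
  have not_opp: "?b \<noteq> - ?a"
  proof
    assume "?b = - ?a"
    then have "word_lin (rev u) ?b = word_lin (rev u) (word_lin u (- simple_root s))"
      by (simp add: linear_neg[OF linear_word_lin])
    then show False using braid(1) word_lin_rev_word_lin[OF u] by simp
  qed
  have YB: "fold (\<lambda>\<gamma> acc. acc \<circ> R \<gamma>) ?roots id = fold (\<lambda>\<gamma> acc. R \<gamma> \<circ> acc) ?roots id"
    using yang_baxter[OF a b obtuse not_opp] unfolding roots .
  have "R_word (u @ alt_word t s k) = fold (\<lambda>\<beta> acc. R \<beta> \<circ> acc) (rev ?roots) id \<circ> R_word u"
    by (simp add: R_word_append rev_roots rev_map)
  also have "\<dots> = R_word (u @ alt_word s t k)"
    by (simp only: fold_comp_rev YB R_word_append)
  finally show ?thesis by simp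
qed simp

definition reduced_invariant_below :: "nat \<Rightarrow> bool" where
  "reduced_invariant_below k \<longleftrightarrow> (\<forall>A B u. length A < k \<longrightarrow> reduced_word A \<longrightarrow> reduced_word B
      \<longrightarrow> elem A = elem B \<longrightarrow> is_word u \<longrightarrow> R_word (u @ A) = R_word (u @ B))"

lemma reduced_invariant_belowD:
  "reduced_invariant_below k \<Longrightarrow> length A < k \<Longrightarrow> reduced_word A \<Longrightarrow> reduced_word B \<Longrightarrow> elem A = elem B
    \<Longrightarrow> is_word u \<Longrightarrow> R_word (u @ A) = R_word (u @ B)"
  unfolding reduced_invariant_below_def by blast

lemma R_word_snoc_eq:
  assumes IH: "reduced_invariant_below k"
    and red: "reduced_word (A @ [x])" "reduced_word (B @ [x])"
    and e: "elem (A @ [x]) = elem (B @ [x])" and len: "length (A @ [x]) = k" and u: "is_word u"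
  shows "R_word (u @ A @ [x]) = R_word (u @ B @ [x])"
proof -
  have "x \<le> r" using reduced_word_is_word[OF red(1)] by simp
  then have "elem A = elem B" using word_elem_snoc_cancel e by blast
  moreover have "length A < k" using len by simp
  ultimately have "R_word (u @ A) = R_word (u @ B)"
    using reduced_invariant_belowD[OF IH _ reduced_word_appendD1[OF red(1)] reduced_word_appendD1[OF red(2)] _ u]
    by blast
  moreover have "word_lin (u @ A) = word_lin (u @ B)"
    using word_lin_eq_if_word_elem_eq[OF \<open>elem A = elem B\<close>] by (simp add: word_lin_append)
  ultimately show ?thesis using R_word_snoc[of "u @ A" x] R_word_snoc[of "u @ B" x] by simp
qed

lemma R_word_Cons_eq:
  assumes IH: "reduced_invariant_below k"
    and red: "reduced_word (c # A)" "reduced_word (c # B)"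
    and e: "elem (c # A) = elem (c # B)" and len: "length (c # A) = k" and u: "is_word u"
  shows "R_word (u @ c # A) = R_word (u @ c # B)"
proof -
  have c: "c \<le> r" using reduced_word_is_word[OF red(1)] by auto
  have "reduced_word A" "reduced_word B"
    using reduced_word_appendD2[of "[c]" A] reduced_word_appendD2[of "[c]" B] red by simp_all
  moreover have "elem A = elem B" by (rule word_elem_Cons_cancel[OF c e])
  moreover have "is_word (u @ [c])" using u c by simp
  moreover have "length A < k" using len by simp
  ultimately have "R_word ((u @ [c]) @ A) = R_word ((u @ [c]) @ B)"
    using reduced_invariant_belowD[OF IH] by blast
  then show ?thesis by simp
qed

text \<open>
  If z is a right descent of the element of V, exchanging a letter of V for a final z either
  keeps the first letter of V, and then V already has the operator of P z by induction, or it
  deletes the first letter.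
\<close>
lemma R_word_exchange_step:
  assumes IH: "reduced_invariant_below k"
    and V: "reduced_word V" "length V = k"
    and P: "reduced_word (P @ [z])" "elem (P @ [z]) = elem V"
    and desc: "\<not> aff_pos (word_act V (aff_simple_root z))" and u: "is_word u"
  shows "R_word (u @ V) = R_word (u @ P @ [z])
    \<or> reduced_word (tl V @ [z]) \<and> elem (tl V @ [z]) = elem V \<and> R_word (u @ tl V @ [z]) = R_word (u @ P @ [z])"
proof -
  have z: "z \<le> r" and wV: "is_word V" using reduced_word_is_word[OF P(1)] reduced_word_is_word[OF V(1)] by auto
  obtain p where p: "p < length V" "elem (delete_at p V) = elem V \<circ> gen \<alpha> \<theta> z"
    using exchange_condition[OF wV z desc] by blast
  let ?D = "delete_at p V @ [z]"
  have eD: "elem ?D = elem V" using p(2) word_elem_eq_comp_gen_iff[OF z] by blast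
  have lenD: "length ?D = k" using p(1) V(2) by (simp add: length_delete_at)
  have redD: "reduced_word ?D"
    using reduced_word_if_same_length[OF V(1) _ eD] is_word_delete_at[OF wV, of p] z lenD V(2) by simp
  have D_P: "R_word (u @ ?D) = R_word (u @ P @ [z])"
    using R_word_snoc_eq[OF IH redD P(1)] eD P(2) lenD u by simp
  show ?thesis
  proof (cases p)
    case 0
    then have "?D = tl V @ [z]" by (simp add: delete_at_0)
    with redD eD D_P show ?thesis by simp
  next
    case (Suc q)
    obtain c rest where V_eq: "V = c # rest" using p(1) by (cases V) auto
    let ?D' = "c # (delete_at q rest @ [z])"
    have D: "?D = ?D'" using Suc V_eq by (simp add: delete_at_Cons_Suc)
    have "reduced_word ?D'" "elem ?D' = elem V" "length ?D' = k"
      using redD eD lenD unfolding D by simp_all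
    then have "R_word (u @ ?D') = R_word (u @ c # rest)"
      using R_word_Cons_eq[OF IH _ _ _ _ u] V(1) unfolding V_eq by blast
    then have "R_word (u @ ?D) = R_word (u @ V)" unfolding D V_eq[symmetric] .
    with D_P show ?thesis by simp
  qed
qed

text \<open>
  Both x and y are right descents of the common element of A and B, so the exchange step applies
  to chain_word n and the letter that ends chain_word (n - 1).
\<close>
lemma R_word_chain_word_step:
  assumes IH: "reduced_invariant_below (length A)"
    and A: "reduced_word A" "A = A' @ [x]" and B: "reduced_word B" "B = B' @ [y]"
    and e: "elem A = elem B" and u: "is_word u" and n: "1 \<le> n" "n \<le> length A"
    and W: "reduced_word (chain_word A B x y n)" "elem (chain_word A B x y n) = elem A"
      "reduced_word (chain_word A B x y (n - 1))" "elem (chain_word A B x y (n - 1)) = elem A"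
  shows "R_word (u @ chain_word A B x y n) = R_word (u @ chain_word A B x y (n - 1))
    \<or> reduced_word (chain_word A B x y (Suc n)) \<and> elem (chain_word A B x y (Suc n)) = elem A
      \<and> R_word (u @ chain_word A B x y (Suc n)) = R_word (u @ chain_word A B x y (n - 1))"
proof -
  let ?W = "chain_word A B x y" and ?z = "if even n then x else y"
  obtain P where "?W (n - 1) = P @ [if even (n - 1) then y else x]"
    using chain_word_snoc[OF A(2) B(2), where n = "n - 1"] by blast
  moreover have "(if even (n - 1) then y else x) = ?z" using n(1) by (cases n) auto
  ultimately have P: "?W (n - 1) = P @ [?z]" by simp
  have W_Suc: "?W (Suc n) = tl (?W n) @ [?z]" by (rule chain_word_Suc[OF n])
  have lenW: "length (?W n) = length A"
    by (rule length_chain_word) (use n(2) reduced_word_same_length[OF A(1) B(1) e] in simp_all)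
  have wW: "is_word (?W n)" using reduced_word_is_word[OF W(1)] .
  have actA: "word_act (?W n) (aff_simple_root x) = word_act A (aff_simple_root x)"
    by (rule word_act_eq_if_word_elem_eq[OF wW reduced_word_is_word[OF A(1)] W(2)])
  have actB: "word_act (?W n) (aff_simple_root y) = word_act B (aff_simple_root y)"
    by (rule word_act_eq_if_word_elem_eq[OF wW reduced_word_is_word[OF B(1)] trans[OF W(2) e]])
  have "\<not> aff_pos (word_act A (aff_simple_root x))" "\<not> aff_pos (word_act B (aff_simple_root y))"
    using reduced_word_snoc_not_pos[OF A(1)[unfolded A(2)]] reduced_word_snoc_not_pos[OF B(1)[unfolded B(2)]]
    unfolding A(2) B(2) by simp_all
  then have desc: "\<not> aff_pos (word_act (?W n) (aff_simple_root ?z))"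
    using actA actB by (cases "even n") simp_all
  have "reduced_word (P @ [?z])" "elem (P @ [?z]) = elem (?W n)" using W(2-4) P by simp_all
  from R_word_exchange_step[OF IH[folded lenW] W(1) refl this desc u]
  show ?thesis
  proof
    assume "R_word (u @ ?W n) = R_word (u @ P @ [?z])"
    then show ?thesis using P by simp
  next
    assume "reduced_word (tl (?W n) @ [?z]) \<and> elem (tl (?W n) @ [?z]) = elem (?W n)
      \<and> R_word (u @ tl (?W n) @ [?z]) = R_word (u @ P @ [?z])"
    then show ?thesis using P W_Suc W(2) by simp
  qed
qed

text \<open>
  Matsumoto's argument for two reduced words A' x and B' y with x \<noteq> y: along the words
  chain_word, either the operator stays the same at some step, or the walk reaches the two
  alternating words y x y ... and x y x ..., which are related by a braid relation.
\<close>
lemma R_word_distinct_last_eq: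
  assumes IH: "reduced_invariant_below (length A)"
    and A: "reduced_word A" "A = A' @ [x]" and B: "reduced_word B" "B = B' @ [y]"
    and e: "elem A = elem B" and xy: "x \<noteq> y" and u: "is_word u"
  shows "R_word (u @ A) = R_word (u @ B)"
proof -
  define W where "W = chain_word A B x y"
  let ?Q = "\<lambda>n. R_word (u @ W n) = R_word (u @ W (n - 1))"
  let ?good = "\<lambda>w. reduced_word w \<and> elem w = elem A"
  have x: "x \<le> r" and y: "y \<le> r" using reduced_word_is_word[OF A(1)] reduced_word_is_word[OF B(1)] A(2) B(2) by simp_all
  have W0: "W 0 = B" and W1: "W 1 = A" by (simp_all add: W_def chain_word_def)
  have invariant: "?Q 1 \<or> ?good (W n) \<and> ?good (W (n - 1)) \<and> (?Q n \<longrightarrow> ?Q 1)"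
    if "1 \<le> n" "n \<le> length A + 1" for n
    using that
  proof (induction n)
    case (Suc n)
    show ?case
    proof (cases "n = 0")
      case True then show ?thesis using A(1) B(1) e W0 W1 by simp
    next
      case False
      then have n: "1 \<le> n" "n \<le> length A" using Suc.prems by auto
      with Suc.IH have "?Q 1 \<or> ?good (W n) \<and> ?good (W (n - 1)) \<and> (?Q n \<longrightarrow> ?Q 1)" by simp
      then consider "?Q 1" | "?good (W n)" "?good (W (n - 1))" "?Q n \<longrightarrow> ?Q 1" by blast
      then show ?thesis
      proof cases
        case 2
        then show ?thesis
          using R_word_chain_word_step[OF IH A B e u n] unfolding W_def by auto
      qed simp
    qed
  qed simp
  have "W (length A + 1) = alt_word y x (length A)" "W (length A) = alt_word x y (length A)"
    unfolding W_def using chain_word_Suc_length chain_word_length[OF A(2)] by simp_all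
  then have "?Q 1 \<or> ?good (alt_word y x (length A)) \<and> ?good (alt_word x y (length A))
      \<and> (R_word (u @ alt_word y x (length A)) = R_word (u @ alt_word x y (length A)) \<longrightarrow> ?Q 1)"
    using invariant[of "length A + 1"] by simp
  moreover have "R_word (u @ alt_word y x (length A)) = R_word (u @ alt_word x y (length A))"
    if "?good (alt_word y x (length A))" "?good (alt_word x y (length A))"
    using R_word_braid[OF y x xy[symmetric] _ _ _ u] that by simp
  ultimately have "?Q 1" by blast
  then show ?thesis using W0 W1 by simp
qed

theorem R_word_reduced_eq:
  assumes "reduced_word A" "reduced_word B" "elem A = elem B" "is_word u"
  shows "R_word (u @ A) = R_word (u @ B)"
proof -
  have "reduced_invariant_below k" for k
  proof (induction k rule: less_induct)
    case (less k)
    show ?case unfolding reduced_invariant_below_def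
    proof (intro allI impI)
      fix A B u assume h: "length A < k" "reduced_word A" "reduced_word B" "elem A = elem B" "is_word u"
      have IH: "reduced_invariant_below (length A)" using less h(1) by blast
      have len: "length B = length A" using reduced_word_same_length[OF h(2-4)] by simp
      show "R_word (u @ A) = R_word (u @ B)"
      proof (cases A rule: rev_cases)
        case Nil then show ?thesis using len by simp
      next
        case (snoc A' x)
        then obtain B' y where B: "B = B' @ [y]" using len by (cases B rule: rev_cases) auto
        show ?thesis
        proof (cases "x = y")
          case True
          have "R_word (u @ A' @ [x]) = R_word (u @ B' @ [x])"
            by (rule R_word_snoc_eq[OF IH]) (use h snoc B True in simp_all)
          then show ?thesis using snoc B True by simp
        next
          case False
          from R_word_distinct_last_eq[OF IH h(2) snoc h(3) B h(4) False h(5)] show ?thesis .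
        qed
      qed
    qed
  qed
  then show ?thesis using reduced_invariant_belowD[of "Suc (length A)" A B u] assms by simp
qed

text \<open>
  Deleting a letter p from a reduced word \<rho> with \<rho> s_j shorter, and appending j, gives another
  reduced word \<rho>' j for the same element; its last root is - \<rho>(\<alpha>_j), which cancels.
\<close>
lemma R_word_snoc_descent:
  assumes red: "reduced_word \<rho>" and j: "j \<le> r"
    and desc: "\<not> aff_pos (word_act \<rho> (aff_simple_root j))"
  obtains \<rho>' where "reduced_word \<rho>'" "elem \<rho>' = elem \<rho> \<circ> gen \<alpha> \<theta> j"
    "R (word_lin \<rho> (simple_root j)) \<circ> R_word \<rho> = R_word \<rho>'"
proof -
  have w: "is_word \<rho>" using reduced_word_is_word[OF red] .
  obtain q where q: "q < length \<rho>" "elem (delete_at q \<rho>) = elem \<rho> \<circ> gen \<alpha> \<theta> j"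
    using exchange_condition[OF w j desc] by blast
  let ?\<rho>' = "delete_at q \<rho>"
  have w': "is_word ?\<rho>'" using is_word_delete_at[OF w] .
  have e: "elem (?\<rho>' @ [j]) = elem \<rho>" using q(2) word_elem_eq_comp_gen_iff[OF j] by blast
  have red': "reduced_word (?\<rho>' @ [j])"
    using reduced_word_if_same_length[OF red _ e] w' j q(1) by (simp add: length_delete_at)
  have R_\<rho>: "R_word \<rho> = R (word_lin ?\<rho>' (simple_root j)) \<circ> R_word ?\<rho>'"
    using R_word_reduced_eq[OF red red' e[symmetric], of "[]"] R_word_snoc by simp
  have "word_lin \<rho> (simple_root j) = word_lin (?\<rho>' @ [j]) (simple_root j)"
    using word_lin_eq_if_word_elem_eq[OF e] by simp
  then have neg: "word_lin \<rho> (simple_root j) = - word_lin ?\<rho>' (simple_root j)"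
    using refl_self[OF simple_root_nonzero[OF j]] by (simp add: word_lin_snoc linear_neg[OF linear_word_lin])
  have "word_lin ?\<rho>' (simple_root j) \<in> \<Phi>" using word_lin_root[OF w' simple_root_mem[OF j]] .
  then have "R (word_lin \<rho> (simple_root j)) \<circ> R_word \<rho> = R_word ?\<rho>'"
    using R_\<rho> neg R_uminus_comp by (simp add: comp_assoc[symmetric])
  then show ?thesis by (rule that[OF reduced_word_appendD1[OF red'] q(2)])
qed

lemma R_word_eq_reduced:
  "is_word w \<Longrightarrow> \<exists>\<rho>. reduced_word \<rho> \<and> elem \<rho> = elem w \<and> R_word w = R_word \<rho>"
proof (induction w rule: rev_induct)
  case Nil then show ?case using reduced_word_Nil by blast
next
  case (snoc j w)
  then have j: "j \<le> r" by simp
  obtain \<rho> where \<rho>: "reduced_word \<rho>" "elem \<rho> = elem w" "R_word w = R_word \<rho>" using snoc by auto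
  have op: "R_word (w @ [j]) = R (word_lin \<rho> (simple_root j)) \<circ> R_word \<rho>"
    using R_word_snoc[of w j] word_lin_eq_if_word_elem_eq[OF \<rho>(2)] \<rho>(3) by simp
  show ?case
  proof (cases "aff_pos (word_act \<rho> (aff_simple_root j))")
    case True
    have "reduced_word (\<rho> @ [j])" by (rule reduced_word_snocI[OF \<rho>(1) j True])
    moreover have "elem (\<rho> @ [j]) = elem (w @ [j])" using \<rho>(2) by (simp add: word_elem_snoc)
    moreover have "R_word (w @ [j]) = R_word (\<rho> @ [j])" using op R_word_snoc[of \<rho> j] by simp
    ultimately show ?thesis by blast
  next
    case False
    obtain \<rho>' where \<rho>': "reduced_word \<rho>'" "elem \<rho>' = elem \<rho> \<circ> gen \<alpha> \<theta> j"
      "R (word_lin \<rho> (simple_root j)) \<circ> R_word \<rho> = R_word \<rho>'"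
      by (rule R_word_snoc_descent[OF \<rho>(1) j False])
    have "elem \<rho>' = elem (w @ [j])" using \<rho>(2) \<rho>'(2) by (simp add: word_elem_snoc)
    then show ?thesis using \<rho>'(1,3) op by (intro exI[of _ \<rho>']) simp
  qed
qed

lemma R_word_eq_if_word_elem_eq:
  assumes "is_word w" "is_word w'" "elem w = elem w'" shows "R_word w = R_word w'"
proof -
  obtain \<rho> where \<rho>: "reduced_word \<rho>" "elem \<rho> = elem w" "R_word w = R_word \<rho>"
    using R_word_eq_reduced[OF assms(1)] by blast
  obtain \<rho>' where \<rho>': "reduced_word \<rho>'" "elem \<rho>' = elem w'" "R_word w' = R_word \<rho>'"
    using R_word_eq_reduced[OF assms(2)] by blast
  have "R_word ([] @ \<rho>) = R_word ([] @ \<rho>')"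
    by (rule R_word_reduced_eq[OF \<rho>(1) \<rho>'(1)]) (use \<rho>(2) \<rho>'(2) assms(3) in simp_all)
  then show ?thesis using \<rho>(3) \<rho>'(3) by simp
qed

end

theorem lemma9p3:
  fixes \<Phi> :: "'a::euclidean_space set" and r :: nat and \<alpha> :: "nat \<Rightarrow> 'a" and \<theta> :: 'a
    and sc :: "'k::field \<Rightarrow> 'v::ab_group_add \<Rightarrow> 'v"
    and R :: "'a \<Rightarrow> 'v \<Rightarrow> 'v"
    and w w' :: "nat list"
  assumes "irreducible_root_system \<Phi>"
    and "simple_roots \<Phi> r \<alpha>"
    and "highest_coroot_root \<Phi> r \<alpha> \<theta>"
    and "vector_space sc"
    and "R_matrix sc \<Phi> R"
    and "set w \<subseteq> {0..r}" and "set w' \<subseteq> {0..r}"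
    and "word_elem \<alpha> \<theta> w = word_elem \<alpha> \<theta> w'"
  shows "word_operator R \<alpha> \<theta> w = word_operator R \<alpha> \<theta> w'"
proof -
  interpret R_matrix_datum \<Phi> r \<alpha> \<theta> R
    using assms(1-3,5) by unfold_locales (auto simp: irreducible_root_system_def R_matrix_def)
  show ?thesis using R_word_eq_if_word_elem_eq assms(6-8) by blast
qed

end
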